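(* Let $n\ge d$, $\mathbf X\in\mathbb R^{n\times d}$ a fixed full-column-rank matrix, $1\le k<d$, and suppose $\mathbf y\sim\mathcal N(\mathbf X\boldsymbol\beta,\sigma^2\mathbf I_n)$ with $\boldsymbol\beta_{1:k}=\mathbf 0$ (the hypothesis $H_{1:k}$), $\boldsymbol\beta_{-1:k}\in\mathbb R^{d-k}$ and $\sigma>0$ arbitrary. Let $M\ge1$ and let $\mathbf y^{(1)},\dots,\mathbf y^{(M)}$, $\lambda$, $\tilde{\boldsymbol\beta}^\lambda_{1:k}$ and the statistic $L$ be as in the context. Then for all $\alpha\in[0,1]$, $$\mathbb P\Big(\frac{1}{M+1}\Big(1+\sum_{i=1}^M\mathbf 1\{L(\mathbf y^{(i)})\ge L(\mathbf y)\}\Big)\le\alpha\Big)\le\alpha.$$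
   Context: Notation: $\mathbf A_i$, $\mathbf A_{1:i}$, $\mathbf A_{-1:i}$ denote the $i$-th column, first $i$ columns, and the submatrix with first $i$ columns removed (similarly for vectors). $\mathbf P_{-1:i}$ is the orthogonal projection onto the column space of $\mathbf X_{-1:i}$. $\mathbf V\in\mathbb R^{n\times(n-d+k)}$ has orthonormal columns spanning the orthogonal complement of the column space of $\mathbf X_{-1:k}$, with first $k$ columns $\mathbf V_i=(\mathbf I-\mathbf P_{-1:i})\mathbf X_i/\|(\mathbf I-\mathbf P_{-1:i})\mathbf X_i\|$. Set $\hat{\mathbf y}_{1:k}=\mathbf P_{-1:k}\mathbf y$, $\hat\sigma_{1:k}=\|(\mathbf I-\mathbf P_{-1:k})\mathbf y\|$, $\mathbf u=\mathbf V^T(\mathbf y-\hat{\mathbf y}_{1:k})/\hat\sigma_{1:k}$ (a unit vector with $\mathbf y=\hat{\mathbf y}_{1:k}+\hat\sigma_{1:k}\mathbf V\mathbf u$). Randomization: let $\tilde{\mathbf u},\mathbf u^{(1)},\dots,\mathbf u^{(M)}$ be i.i.d. uniform on the unit sphere $\mathbb S^{n-d+k-1}\subset\mathbb R^{n-d+k}$, independent of $\mathbf y$; set $\tilde{\mathbf y}=\hat{\mathbf y}_{1:k}+\hat\sigma_{1:k}\mathbf V\tilde{\mathbf u}$ and $\mathbf y^{(i)}=\hat{\mathbf y}_{1:k}+\hat\sigma_{1:k}\mathbf V\mathbf u^{(i)}$. The tuning parameter $\lambda>0$ and vector $\tilde{\boldsymbol\beta}^\lambda_{1:k}\in\mathbb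 R^k$ are obtained by applying a fixed (deterministic) cross-validation procedure to $(\tilde{\mathbf y},\mathbf X)$: $\lambda$ is the cross-validated penalty and $\tilde{\boldsymbol\beta}^\lambda_{1:k}$ is the first $k$ coordinates of the group-LASSO estimate $\arg\min_{\boldsymbol\beta}\big(\frac1{2n}\|\tilde{\mathbf y}-\mathbf X\boldsymbol\beta\|_2^2+\lambda(\|\boldsymbol\beta_{1:k}\|_2+\|\boldsymbol\beta_{-1:k}\|_1)\big)$. Statistic: for $\mathbf b\in\mathbb R^k$ let $\hat{\boldsymbol\beta}^\lambda_{-1:k}(\mathbf b)=\arg\min_{\boldsymbol\gamma\in\mathbb R^{d-k}}\big(\frac1{2n}\|\mathbf y-\mathbf X_{1:k}\mathbf b-\mathbf X_{-1:k}\boldsymbol\gamma\|_2^2+\lambda\|\boldsymbol\gamma\|_1\big)$, $\mathcal A(\mathbf b)$ the set of indices in $\{k+1,\dots,d\}$ of its nonzero coefficients, $\mathbf P_{\mathcal A(\mathbf b)}$ the projection onto the span of those columns of $\mathbf X$, $\mathbf S=\mathbf X_{1:k}^T\mathbf V_{1:k}\mathbf V_{1:k}^T\mathbf X_{1:k}$, $\check{\boldsymbol\beta}(\mathbf b)=\mathbf S^{-1}\mathbf X_{1:k}^T\mathbf P_{-1:k}(\mathbf y-\mathbf X_{-1:k}\hat{\boldsymbol\beta}^\lambda_{-1:k}(\mathbf b)-\mathbf P_{\mathcal A(\mathbf b)}\mathbf X_{1:k}\mathbf b)$ and $\boldsymbol\nu=-\frac1{\hat\sigma_{1:k}}\mathbf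 V_{1:k}^T\mathbf X_{1:k}\check{\boldsymbol\beta}(\tilde{\boldsymbol\beta}^\lambda_{1:k})$. With $\tilde{\mathbf b}=\tilde{\boldsymbol\beta}^\lambda_{1:k}$, set $\mathbf A=\hat\sigma_{1:k}\mathbf V_{1:k}^T\mathbf X_{1:k}\big[\mathbf X_{1:k}^T(\mathbf I-\mathbf P_{\mathcal A(\tilde{\mathbf b})})\mathbf X_{1:k}+\frac{n\lambda}{\|\tilde{\mathbf b}\|}\mathbf I\big]^{-1}\mathbf X_{1:k}^T\mathbf V_{1:k}$ if $\tilde{\mathbf b}\ne\mathbf 0$, and $\mathbf A=\frac{\hat\sigma_{1:k}}{n\lambda}\mathbf V_{1:k}^T\mathbf X_{1:k}\mathbf X_{1:k}^T\mathbf V_{1:k}$ if $\tilde{\mathbf b}=\mathbf 0$. Then $L(\mathbf y)=\|\mathbf A(\mathbf u_{1:k}-\boldsymbol\nu)\|$ and $L(\mathbf y^{(i)})=\|\mathbf A(\mathbf u^{(i)}_{1:k}-\boldsymbol\nu)\|$ (with the same $\mathbf A,\boldsymbol\nu$). *)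

theory Defs
  imports "HOL-Probability.Probability"
begin

text \<open>The design matrix is X :: real^('k + 'p)^'n, i.e. n = CARD('n) rows and
  d = CARD('k) + CARD('p) columns; the columns indexed by Inl i (i :: 'k) are the first k
  columns (tested block 1:k, ordered by the linear order on 'k), the columns indexed by Inr q
  are the remaining d - k columns (block -1:k).\<close>

definition gauss_vec :: "'a::euclidean_space \<Rightarrow> real \<Rightarrow> 'a measure" where
  "gauss_vec mu sg = density lborel
     (\<lambda>x. ennreal ((2 * pi * sg\<^sup>2) powr (- real DIM('a) / 2)
                    * exp (- (norm (x - mu))\<^sup>2 / (2 * sg\<^sup>2))))"

text \<open>Uniform distribution (normalized surface measure) on the unit sphere, realised as the
  cone measure: the radial projection of the uniform distribution on the unit ball.\<close>
definition unif_sphere :: "'a::euclidean_space measure" where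
  "unif_sphere = distr (uniform_measure lborel (ball 0 1)) borel (\<lambda>x. x /\<^sub>R norm x)"

text \<open>Joint law of (y, u~, (u^(1),...,u^(M))): all independent.\<close>
definition joint_law ::
  "real^'n::finite \<Rightarrow> real \<Rightarrow> nat \<Rightarrow> ((real^'n) \<times> (real^'m::finite) \<times> (nat \<Rightarrow> real^'m)) measure" where
  "joint_law mu sg M =
     gauss_vec mu sg \<Otimes>\<^sub>M (unif_sphere \<Otimes>\<^sub>M (\<Pi>\<^sub>M i\<in>{1..M}. unif_sphere))"

definition oproj :: "'a::euclidean_space set \<Rightarrow> 'a \<Rightarrow> 'a" where
  "oproj C x = (THE p. p \<in> span C \<and> (\<forall>c\<in>C. inner (x - p) c = 0))"

definition blk1 :: "real^('k::finite + 'p::finite) \<Rightarrow> real^'k" where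
  "blk1 b = (\<chi> i. b $ Inl i)"

definition blk2 :: "real^('k::finite + 'p::finite) \<Rightarrow> real^'p" where
  "blk2 b = (\<chi> q. b $ Inr q)"

definition X1 :: "real^('k::finite + 'p::finite)^'n::finite \<Rightarrow> real^'k^'n" where
  "X1 X = (\<chi> r i. X $ r $ Inl i)"

definition X2 :: "real^('k::finite + 'p::finite)^'n::finite \<Rightarrow> real^'p^'n" where
  "X2 X = (\<chi> r q. X $ r $ Inr q)"

definition cols_after :: "real^('k::{finite,linorder} + 'p::finite)^'n::finite \<Rightarrow> 'k::{finite,linorder} \<Rightarrow> (real^'n) set" where
  "cols_after X i = {column (Inl j) X | j. i < j} \<union> {column (Inr q) X | q. True}"

definition Pk :: "real^('k::finite + 'p::finite)^'n::finite \<Rightarrow> real^'n \<Rightarrow> real^'n" where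
  "Pk X = oproj {column (Inr q) X | q. True}"

definition Vcol :: "real^('k::{finite,linorder} + 'p::finite)^'n::finite \<Rightarrow> 'k::{finite,linorder} \<Rightarrow> real^'n" where
  "Vcol X i = (let w = column (Inl i) X - oproj (cols_after X i) (column (Inl i) X)
               in w /\<^sub>R norm w)"

definition V1 :: "real^('k::{finite,linorder} + 'p::finite)^'n::finite \<Rightarrow> real^'k::{finite,linorder}^'n" where
  "V1 X = (\<chi> r i. Vcol X i $ r)"

definition yhat :: "real^('k::finite + 'p::finite)^'n::finite \<Rightarrow> real^'n \<Rightarrow> real^'n" where
  "yhat X y = Pk X y"

definition sighat :: "real^('k::finite + 'p::finite)^'n::finite \<Rightarrow> real^'n \<Rightarrow> real" where
  "sighat X y = norm (y - yhat X y)"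

definition l1norm :: "real^'p::finite \<Rightarrow> real" where
  "l1norm g = (\<Sum>q\<in>UNIV. \<bar>g $ q\<bar>)"

text \<open>A minimiser of f (the minimisers below are unique since X has full column rank).\<close>
definition argmin :: "('a \<Rightarrow> real) \<Rightarrow> 'a" where
  "argmin f = (SOME x. \<forall>z. f x \<le> f z)"

definition group_lasso ::
  "real^('k::finite + 'p::finite)^'n::finite \<Rightarrow> real^'n \<Rightarrow> real \<Rightarrow> real^('k + 'p)" where
  "group_lasso X y lam = argmin (\<lambda>b. (1 / (2 * real CARD('n))) * (norm (y - X *v b))\<^sup>2
                                   + lam * (norm (blk1 b) + l1norm (blk2 b)))"

definition lasso_rest ::
  "real^('k::finite + 'p::finite)^'n::finite \<Rightarrow> real^'n \<Rightarrow> real \<Rightarrow> real^'k \<Rightarrow> real^'p" where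
  "lasso_rest X y lam b = argmin (\<lambda>g. (1 / (2 * real CARD('n)))
        * (norm (y - X1 X *v b - X2 X *v g))\<^sup>2 + lam * l1norm g)"

definition active ::
  "real^('k::finite + 'p::finite)^'n::finite \<Rightarrow> real^'n \<Rightarrow> real \<Rightarrow> real^'k \<Rightarrow> 'p set" where
  "active X y lam b = {q. lasso_rest X y lam b $ q \<noteq> 0}"

definition PA :: "real^('k::finite + 'p::finite)^'n::finite \<Rightarrow> 'p set \<Rightarrow> real^'n \<Rightarrow> real^'n" where
  "PA X A = oproj {column (Inr q) X | q. q \<in> A}"

definition Smat :: "real^('k::{finite,linorder} + 'p::finite)^'n::finite \<Rightarrow> real^'k::{finite,linorder}^'k::{finite,linorder}" where
  "Smat X = transpose (X1 X) ** V1 X ** transpose (V1 X) ** X1 X"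

definition betacheck ::
  "real^('k::{finite,linorder} + 'p::finite)^'n::finite \<Rightarrow> real^'n \<Rightarrow> real \<Rightarrow> real^'k::{finite,linorder} \<Rightarrow> real^'k::{finite,linorder}" where
  "betacheck X y lam b = matrix_inv (Smat X) *v (transpose (X1 X) *v
      Pk X (y - X2 X *v lasso_rest X y lam b - PA X (active X y lam b) (X1 X *v b)))"

definition nuvec ::
  "real^('k::{finite,linorder} + 'p::finite)^'n::finite \<Rightarrow> real^'n \<Rightarrow> real \<Rightarrow> real^'k::{finite,linorder} \<Rightarrow> real^'k::{finite,linorder}" where
  "nuvec X y lam bt = - ((1 / sighat X y) *\<^sub>R ((transpose (V1 X) ** X1 X) *v betacheck X y lam bt))"

definition resid_X1 ::
  "real^('k::finite + 'p::finite)^'n::finite \<Rightarrow> 'p set \<Rightarrow> real^'k^'n" where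
  "resid_X1 X A = (\<chi> r i. (column i (X1 X) - PA X A (column i (X1 X))) $ r)"

definition Amat ::
  "real^('k::{finite,linorder} + 'p::finite)^'n::finite \<Rightarrow> real^'n \<Rightarrow> real \<Rightarrow> real^'k::{finite,linorder} \<Rightarrow> real^'k::{finite,linorder}^'k::{finite,linorder}" where
  "Amat X y lam bt =
     (if bt \<noteq> 0 then
        sighat X y *\<^sub>R (transpose (V1 X) ** X1 X
          ** matrix_inv (transpose (X1 X) ** resid_X1 X (active X y lam bt)
                          + (real CARD('n) * lam / norm bt) *\<^sub>R mat 1)
          ** transpose (X1 X) ** V1 X)
      else (sighat X y / (real CARD('n) * lam)) *\<^sub>R
          (transpose (V1 X) ** X1 X ** transpose (X1 X) ** V1 X))"

text \<open>L evaluated at a vector w playing the role of u_{1:k}, with A and nu computed from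
  y, lam and the (tilde) coefficient bt.\<close>
definition Lstat ::
  "real^('k::{finite,linorder} + 'p::finite)^'n::finite \<Rightarrow> real^'n \<Rightarrow> real \<Rightarrow> real^'k::{finite,linorder} \<Rightarrow> real^'k::{finite,linorder} \<Rightarrow> real" where
  "Lstat X y lam bt w = norm (Amat X y lam bt *v (w - nuvec X y lam bt))"

text \<open>Given y, u~, the draws u^(1..M), the matrix V, the identification e of the first k
  columns of V, and the cross-validation rule cv (lam = cv y~).\<close>
definition mc_pvalue ::
  "real^('k::{finite,linorder} + 'p::finite)^'n::finite \<Rightarrow> real^'m::finite^'n \<Rightarrow> ('k::{finite,linorder} \<Rightarrow> 'm)
   \<Rightarrow> (real^'n \<Rightarrow> real) \<Rightarrow> nat \<Rightarrow> real^'n \<Rightarrow> real^'m \<Rightarrow> (nat \<Rightarrow> real^'m) \<Rightarrow> real" where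
  "mc_pvalue X V e cv M y ut us =
     (let yh = yhat X y; sh = sighat X y;
          u = (1 / sh) *\<^sub>R (transpose V *v (y - yh));
          yt = yh + sh *\<^sub>R (V *v ut);
          lam = cv yt;
          bt = blk1 (group_lasso X yt lam);
          L0 = Lstat X y lam bt (\<chi> i. u $ e i);
          Li = (\<lambda>j. Lstat X y lam bt (\<chi> i. us j $ e i))
      in (1 + real (card {j \<in> {1..M}. Li j \<ge> L0})) / (real M + 1))"

end

theory Submission
  imports Defs
begin

text \<open>Under the null hypothesis the mean X beta lies in the column span of X_{-1:k}, and y
  splits into P_{-1:k} y, the radius sighat = |V^T y| and the direction u = V^T y / sighat.
  For a spherical Gaussian the direction is uniform on the sphere and independent of the other
  two components. Everything entering A, nu and the tuning parameter depends on y only through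
  P_{-1:k} y and sighat (the lasso objective changes by a constant when y moves along the
  columns of V). Hence exchanging u with a draw u^(j) preserves the joint law and turns the
  Monte Carlo p-value into the normalised rank of L(y^(j)) among the M + 1 values. At most
  alpha (M + 1) of these ranks can be at most alpha (M + 1), so averaging over the M + 1
  exchanges bounds the rejection probability by alpha.\<close>

section \<open>Linear isometries preserve Lebesgue measure\<close>

text \<open>The library proves rotation invariance of Lebesgue measure only on real^'n with a
  well-ordered index type; basis_index supplies such a type for an arbitrary Euclidean space,
  through whose coordinates linear isometries are transported.\<close>

typedef (overloaded) ('a::euclidean_space) basis_index = "{..<DIM('a)}"
  morphisms basis_index_rep Abs_basis_index
  by (rule exI[of _ 0]) simp

instantiation basis_index :: (euclidean_space) wellorder
begin

definition "less_eq_basis_index (x::'a basis_index) (y::'a basis_index) \<longleftrightarrow>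
  basis_index_rep x \<le> basis_index_rep y"
definition "less_basis_index (x::'a basis_index) (y::'a basis_index) \<longleftrightarrow>
  basis_index_rep x < basis_index_rep y"

instance
proof
  fix P :: "'a basis_index \<Rightarrow> bool" and a
  assume "\<And>x. (\<And>y. y < x \<Longrightarrow> P y) \<Longrightarrow> P x"
  then show "P a"
    using measure_induct_rule[of basis_index_rep P a] by (auto simp: less_basis_index_def)
qed (auto simp: less_eq_basis_index_def less_basis_index_def basis_index_rep_inject)

end

instance basis_index :: (euclidean_space) finite
  by standard
    (metis type_definition.Abs_image[OF type_definition_basis_index] finite_imageI finite_lessThan)

lemma card_basis_index: "CARD('a::euclidean_space basis_index) = DIM('a)"
  using type_definition.card[OF type_definition_basis_index] by simp

definition basis_enum :: "'a basis_index \<Rightarrow> 'a::euclidean_space" where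
  "basis_enum = (SOME h. bij_betw h UNIV Basis)"

lemma bij_betw_basis_enum: "bij_betw (basis_enum :: 'a basis_index \<Rightarrow> 'a::euclidean_space) UNIV Basis"
proof -
  have "\<exists>h. bij_betw h (UNIV :: 'a basis_index set) (Basis :: 'a set)"
    by (rule finite_same_card_bij) (auto simp: card_basis_index)
  then show ?thesis unfolding basis_enum_def by (rule someI_ex)
qed

lemma Basis_eq_range_basis_enum: "(Basis :: 'a::euclidean_space set) = range basis_enum"
  using bij_betw_basis_enum by (auto simp: bij_betw_def)

lemma basis_enum_in_Basis [simp]: "basis_enum i \<in> Basis"
  using bij_betw_basis_enum by (auto simp: bij_betw_def)

lemma inner_basis_enum: "basis_enum i \<bullet> basis_enum j = (if i = j then 1 else 0)"
  using bij_betw_basis_enum unfolding bij_betw_def inj_on_def by (auto simp: inner_Basis)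

definition to_coords :: "'a::euclidean_space \<Rightarrow> real^'a basis_index" where
  "to_coords x = (\<chi> i. x \<bullet> basis_enum i)"

definition of_coords :: "real^'a basis_index \<Rightarrow> 'a::euclidean_space" where
  "of_coords v = (\<Sum>i\<in>UNIV. (v $ i) *\<^sub>R basis_enum i)"

lemma inner_of_coords: "of_coords v \<bullet> basis_enum j = v $ j"
  by (simp add: of_coords_def inner_sum_left inner_basis_enum if_distrib cong: if_cong)

lemma to_coords_of_coords [simp]: "to_coords (of_coords v) = v"
  by (simp add: to_coords_def inner_of_coords vec_eq_iff)

lemma sum_basis_enum: "(\<Sum>i\<in>UNIV. f (basis_enum i)) = (\<Sum>b\<in>(Basis :: 'a::euclidean_space set). f b)"
  unfolding Basis_eq_range_basis_enum
  by (subst sum.reindex) (use bij_betw_basis_enum in \<open>auto simp: bij_betw_def\<close>)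

lemma of_coords_to_coords [simp]: "of_coords (to_coords x) = x"
  by (simp add: of_coords_def to_coords_def sum_basis_enum[of "\<lambda>b. (x \<bullet> b) *\<^sub>R b"]
      euclidean_representation)

lemma norm_to_coords [simp]: "norm (to_coords x) = norm x"
proof -
  have "norm (to_coords x) ^ 2 = (\<Sum>b\<in>Basis. (x \<bullet> b)^2)"
    by (simp add: to_coords_def norm_vec_def L2_set_def sum_nonneg sum_basis_enum[of "\<lambda>b. (x \<bullet> b)^2"])
  also have "\<dots> = x \<bullet> x"
    by (simp add: euclidean_inner[of x x] power2_eq_square)
  also have "\<dots> = norm x ^ 2"
    by (simp add: dot_square_norm)
  finally show ?thesis by (simp add: power2_eq_iff_nonneg)
qed

lemma linear_to_coords: "linear to_coords"
  by (auto simp: linear_iff to_coords_def vec_eq_iff inner_add_left)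

lemma linear_of_coords: "linear of_coords"
  by (auto simp: linear_iff of_coords_def scaleR_add_left sum.distrib scaleR_sum_right)

lemma borel_measurable_linear:
  fixes f :: "'a::euclidean_space \<Rightarrow> 'b::real_normed_vector"
  shows "linear f \<Longrightarrow> f \<in> borel_measurable borel"
  by (intro borel_measurable_continuous_onI linear_continuous_on) (simp add: linear_conv_bounded_linear)

lemma to_coords_measurable [measurable]: "to_coords \<in> borel_measurable borel"
  by (rule borel_measurable_linear[OF linear_to_coords])

lemma of_coords_measurable [measurable]: "of_coords \<in> borel_measurable borel"
  by (rule borel_measurable_linear[OF linear_of_coords])

lemma distr_lborel_to_coords:
  "distr lborel borel to_coords = (lborel :: (real^'a::euclidean_space basis_index) measure)"
proof (rule lborel_eqI[symmetric])
  fix l u :: "real^'a basis_index"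
  assume le: "\<And>b. b \<in> Basis \<Longrightarrow> l \<bullet> b \<le> u \<bullet> b"
  have le': "l $ i \<le> u $ i" for i
    using le[of "axis i 1"] by (auto simp: Basis_vec_def cart_eq_inner_axis)
  have "to_coords -` box l u = box (of_coords l) (of_coords u :: 'a)"
    by (auto simp: mem_box_cart to_coords_def mem_box Basis_eq_range_basis_enum inner_of_coords)
  then have "emeasure (distr lborel borel to_coords) (box l u)
      = emeasure lborel (box (of_coords l) (of_coords u :: 'a))"
    by (simp add: emeasure_distr)
  also have "\<dots> = (\<Prod>b\<in>Basis. (of_coords u - of_coords l :: 'a) \<bullet> b)"
    using le' by (intro emeasure_lborel_box) (auto simp: Basis_eq_range_basis_enum inner_of_coords)
  also have "\<dots> = (\<Prod>i\<in>UNIV. (u $ i - l $ i))"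
    unfolding Basis_eq_range_basis_enum
    by (subst prod.reindex) (use bij_betw_basis_enum in \<open>auto simp: bij_betw_def inner_diff_left inner_of_coords\<close>)
  also have "\<dots> = (\<Prod>b\<in>Basis. (u - l) \<bullet> b)"
  proof -
    have B: "(Basis :: (real^'a basis_index) set) = range (\<lambda>i. axis i 1)"
      by (auto simp: Basis_vec_def)
    show ?thesis unfolding B
      by (subst prod.reindex) (auto simp: inj_on_def axis_eq_axis inner_axis)
  qed
  finally show "emeasure (distr lborel borel to_coords) (box l u) = (\<Prod>b\<in>Basis. (u - l) \<bullet> b)" .
qed simp

lemma emeasure_lebesgue_borel: "S \<in> sets borel \<Longrightarrow> emeasure lebesgue S = emeasure lborel S"
  by (simp add: emeasure_completion main_part_sets)

lemma distr_lborel_orthogonal_transformation: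
  fixes f :: "real^'w::{finite,wellorder} \<Rightarrow> real^'w::_"
  assumes f: "orthogonal_transformation f"
  shows "distr lborel borel f = lborel"
proof (rule lborel_eqI[symmetric])
  fix l u :: "(real, 'w) vec"
  assume le: "\<And>b. b \<in> Basis \<Longrightarrow> l \<bullet> b \<le> u \<bullet> b"
  have lin: "linear f" using f by (simp add: orthogonal_transformation_linear)
  have [measurable]: "f \<in> borel_measurable borel" by (rule borel_measurable_linear[OF lin])
  have g: "orthogonal_transformation (inv f)"
    using f by (rule orthogonal_transformation_inv)
  have pre: "f -` box l u = inv f ` box l u"
    using orthogonal_transformation_bij[OF f] by (simp add: bij_vimage_eq_inv_image)
  have "open (f -` box l u)"
    using lin by (intro continuous_open_vimage) (auto simp: linear_continuous_at linear_conv_bounded_linear)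
  then have "emeasure (distr lborel borel f) (box l u) = emeasure lebesgue (inv f ` box l u)"
    by (simp add: emeasure_distr emeasure_lebesgue_borel pre[symmetric])
  also have "\<dots> = ennreal (measure lebesgue (box l u))"
    using g by (simp add: emeasure_eq_measure2 measurable_orthogonal_image measure_orthogonal_image lmeasurable_box)
  also have "\<dots> = emeasure lborel (box l u)"
    by (simp add: emeasure_eq_measure2[symmetric] lmeasurable_box emeasure_lebesgue_borel)
  finally show "emeasure (distr lborel borel f) (box l u) = (\<Prod>b\<in>Basis. (u - l) \<bullet> b)"
    using le by simp
qed simp

lemma distr_lborel_linear_isometry:
  fixes L :: "'a::euclidean_space \<Rightarrow> 'a"
  assumes lin: "linear L" and iso: "\<And>x. norm (L x) = norm x"
  shows "distr lborel borel L = lborel"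
proof -
  define L' where "L' = to_coords \<circ> L \<circ> of_coords"
  have [measurable]: "L \<in> borel_measurable borel" by (rule borel_measurable_linear[OF lin])
  have "linear L'" unfolding L'_def
    by (intro linear_compose linear_to_coords linear_of_coords lin)
  moreover have "norm (L' v) = norm v" for v
    using norm_to_coords[of "of_coords v :: 'a"] by (simp add: L'_def iso)
  ultimately have orth: "orthogonal_transformation L'"
    by (simp add: orthogonal_transformation)
  have [measurable]: "L' \<in> borel_measurable borel" unfolding L'_def by measurable
  have lborel_eq: "(lborel :: 'a measure) = distr lborel borel of_coords"
  proof -
    have "distr (distr lborel borel to_coords) borel of_coords
        = distr lborel borel (of_coords \<circ> (to_coords :: 'a \<Rightarrow> _))"
      by (simp add: distr_distr)
    then show ?thesis
      by (simp add: comp_def distr_id2 distr_lborel_to_coords)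
  qed
  have "distr lborel borel L = distr lborel borel (L \<circ> of_coords)"
    by (subst lborel_eq) (simp add: distr_distr)
  also have "L \<circ> of_coords = of_coords \<circ> L'"
    by (simp add: L'_def fun_eq_iff)
  also have "distr lborel borel (of_coords \<circ> L') = distr (distr lborel borel L') borel of_coords"
    by (simp add: distr_distr)
  finally show ?thesis
    by (simp add: distr_lborel_orthogonal_transformation[OF orth] lborel_eq[symmetric])
qed

section \<open>Spherical Gaussian vectors\<close>

definition gauss_density :: "'a::euclidean_space \<Rightarrow> real \<Rightarrow> 'a \<Rightarrow> real" where
  "gauss_density mu sg x =
     (2 * pi * sg\<^sup>2) powr (- real DIM('a) / 2) * exp (- (norm (x - mu))\<^sup>2 / (2 * sg\<^sup>2))"

lemma gauss_vec_eq_density: "gauss_vec mu sg = density lborel (\<lambda>x. ennreal (gauss_density mu sg x))"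
  by (simp add: gauss_vec_def gauss_density_def)

lemma gauss_density_nonneg: "0 \<le> gauss_density mu sg x"
  by (simp add: gauss_density_def)

lemma gauss_density_measurable [measurable]: "gauss_density mu sg \<in> borel_measurable borel"
  unfolding gauss_density_def[abs_def] by measurable

lemma sets_gauss_vec [simp, measurable_cong]: "sets (gauss_vec mu sg) = sets borel"
  by (simp add: gauss_vec_def)

lemma space_gauss_vec [simp]: "space (gauss_vec mu sg) = UNIV"
  by (simp add: gauss_vec_def)

lemma gauss_density_eq_prod_normal_density:
  fixes mu :: "'a::euclidean_space"
  assumes sg: "sg > 0"
  shows "gauss_density mu sg x = (\<Prod>b\<in>Basis. normal_density (mu \<bullet> b) sg (x \<bullet> b))"
proof -
  define a where "a = 2 * pi * sg\<^sup>2"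
  have a: "a > 0" using sg by (simp add: a_def)
  have "(\<Prod>b\<in>Basis. normal_density (mu \<bullet> b) sg (x \<bullet> b))
      = (\<Prod>b\<in>(Basis::'a set). 1 / sqrt a) * (\<Prod>b\<in>Basis. exp (- (x \<bullet> b - mu \<bullet> b)\<^sup>2 / (2 * sg\<^sup>2)))"
    unfolding normal_density_def a_def by (rule prod.distrib)
  also have "(\<Prod>b\<in>(Basis::'a set). 1 / sqrt a) = a powr (- real DIM('a) / 2)"
  proof -
    have "1 / sqrt a = a powr (- 1 / 2)"
      using a by (simp add: powr_half_sqrt[symmetric] powr_minus_divide)
    then show ?thesis
      using a by (simp add: powr_power)
  qed
  also have "(\<Prod>b\<in>(Basis::'a set). exp (- (x \<bullet> b - mu \<bullet> b)\<^sup>2 / (2 * sg\<^sup>2)))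
      = exp (- (norm (x - mu))\<^sup>2 / (2 * sg\<^sup>2))"
  proof -
    have "(norm (x - mu))\<^sup>2 = (x - mu) \<bullet> (x - mu)"
      by (simp add: dot_square_norm)
    also have "\<dots> = (\<Sum>b\<in>(Basis::'a set). ((x - mu) \<bullet> b) * ((x - mu) \<bullet> b))"
      by (rule euclidean_inner)
    finally show ?thesis
      by (simp add: exp_sum[symmetric] sum_negf sum_divide_distrib inner_diff_left power2_eq_square)
  qed
  finally show ?thesis by (simp add: gauss_density_def a_def)
qed

lemma prob_space_gauss_vec:
  fixes mu :: "'a::euclidean_space"
  assumes sg: "sg > 0"
  shows "prob_space (gauss_vec mu sg)"
proof (rule prob_spaceI)
  have "emeasure (gauss_vec mu sg) (space (gauss_vec mu sg))
      = (\<integral>\<^sup>+x. (\<Prod>b\<in>Basis. ennreal (normal_density (mu \<bullet> b) sg (x \<bullet> b))) \<partial>lborel)"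
    using sg by (simp add: gauss_vec_eq_density emeasure_density gauss_density_eq_prod_normal_density
        prod_ennreal normal_density_nonneg)
  also have "\<dots> = (\<Prod>b\<in>(Basis::'a set). (\<integral>\<^sup>+x. ennreal (normal_density (mu \<bullet> b) sg x) \<partial>lborel))"
    by (rule nn_integral_lborel_prod) auto
  also have "\<dots> = 1"
  proof (rule prod.neutral, intro ballI)
    fix b :: 'a
    interpret prob_space "density lborel (\<lambda>x. ennreal (normal_density (mu \<bullet> b) sg x))"
      using sg by (rule prob_space_normal_density)
    show "(\<integral>\<^sup>+x. ennreal (normal_density (mu \<bullet> b) sg x) \<partial>lborel) = 1"
      using emeasure_space_1 by (simp add: emeasure_density)
  qed
  finally show "emeasure (gauss_vec mu sg) (space (gauss_vec mu sg)) = 1" .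
qed

lemma gauss_vec_pair_measure:
  fixes m1 :: "'a::euclidean_space" and m2 :: "'b::euclidean_space"
  assumes sg: "sg > 0"
  shows "gauss_vec m1 sg \<Otimes>\<^sub>M gauss_vec m2 sg = gauss_vec (m1, m2) sg"
proof -
  interpret p2: prob_space "gauss_vec m2 sg" using sg by (rule prob_space_gauss_vec)
  have "gauss_vec m1 sg \<Otimes>\<^sub>M gauss_vec m2 sg
      = density (lborel \<Otimes>\<^sub>M lborel)
          (\<lambda>(x, y). ennreal (gauss_density m1 sg x) * ennreal (gauss_density m2 sg y))"
    unfolding gauss_vec_eq_density
    by (rule pair_measure_density)
      (auto simp: gauss_vec_eq_density[symmetric] intro: p2.sigma_finite_measure_axioms sigma_finite_lborel)
  also have "\<dots> = density lborel (\<lambda>z. ennreal (gauss_density (m1, m2) sg z))"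
  proof -
    have "gauss_density m1 sg x * gauss_density m2 sg y = gauss_density (m1, m2) sg (x, y)" for x y
      unfolding gauss_density_def
      by (simp add: norm_Pair powr_add[symmetric] exp_add[symmetric] add_divide_distrib
          algebra_simps diff_divide_distrib)
    then show ?thesis
      by (simp add: lborel_prod split_beta' ennreal_mult'[symmetric] gauss_density_nonneg)
  qed
  finally show ?thesis by (simp add: gauss_vec_eq_density)
qed

lemma distr_gauss_vec_linear_isometry:
  fixes L :: "'a::euclidean_space \<Rightarrow> 'a"
  assumes lin: "linear L" and iso: "\<And>x. norm (L x) = norm x" and fix_mu: "L mu = mu"
  shows "distr (gauss_vec mu sg) borel L = gauss_vec mu sg"
proof -
  have [measurable]: "L \<in> borel_measurable borel" by (rule borel_measurable_linear[OF lin])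
  have invariant: "gauss_density mu sg (L x) = gauss_density mu sg x" for x
  proof -
    have "L x - mu = L (x - mu)" using fix_mu by (simp add: linear_diff[OF lin])
    then show ?thesis by (simp add: gauss_density_def iso)
  qed
  have "distr (gauss_vec mu sg) borel L
      = distr (density lborel (\<lambda>x. ennreal (gauss_density mu sg (L x)))) borel L"
    by (simp add: gauss_vec_eq_density invariant)
  also have "\<dots> = density (distr lborel borel L) (\<lambda>x. ennreal (gauss_density mu sg x))"
    by (rule density_distr[symmetric]) simp_all
  finally show ?thesis
    by (simp add: distr_lborel_linear_isometry[OF lin iso] gauss_vec_eq_density)
qed

section \<open>The uniform distribution on the sphere and polar coordinates\<close>

lemma sets_unif_sphere [simp, measurable_cong]: "sets (unif_sphere :: 'a::euclidean_space measure) = sets borel"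
  by (simp add: unif_sphere_def)

lemma space_unif_sphere [simp]: "space (unif_sphere :: 'a::euclidean_space measure) = UNIV"
  by (simp add: unif_sphere_def)

lemma emeasure_lborel_unit_ball_nonzero: "emeasure lborel (ball (0::'a::euclidean_space) 1) \<noteq> 0"
proof -
  have "\<not> negligible (ball (0::'a) 1)" by (rule open_not_negligible) auto
  then show ?thesis
    using negligible_iff_emeasure0[of "ball (0::'a) 1"] by (auto simp: emeasure_lebesgue_borel)
qed

lemma emeasure_lborel_unit_ball_finite: "emeasure lborel (ball (0::'a::euclidean_space) 1) \<noteq> \<infinity>"
  by (rule less_imp_neq[OF emeasure_lborel_ball_finite])

lemma prob_space_unif_sphere: "prob_space (unif_sphere :: 'a::euclidean_space measure)"
proof -
  interpret prob_space "uniform_measure lborel (ball (0::'a) 1)"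
    by (rule prob_space_uniform_measure)
      (use emeasure_lborel_unit_ball_nonzero emeasure_lborel_unit_ball_finite in auto)
  show ?thesis unfolding unif_sphere_def
    by (rule prob_space_distr) measurable
qed

lemma AE_unif_sphere_norm: "AE w in (unif_sphere :: 'a::euclidean_space measure). norm w = 1"
proof -
  have "AE x in uniform_measure lborel (ball (0::'a) 1). x \<noteq> 0"
    by (rule AE_uniform_measureI) (auto intro: AE_mp[OF AE_lborel_singleton[of 0]])
  then have "AE x in uniform_measure lborel (ball (0::'a) 1). norm (x /\<^sub>R norm x) = 1"
    by (rule AE_mp) (rule AE_I2, simp)
  then show ?thesis unfolding unif_sphere_def
    by (subst AE_distr_iff) (auto simp del: sets_lborel)
qed

definition sector :: "'a::euclidean_space set \<Rightarrow> 'a set" where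
  "sector D = (\<lambda>x. x /\<^sub>R norm x) -` D"

lemma sector_sets [measurable]: "D \<in> sets borel \<Longrightarrow> sector D \<in> sets borel"
  unfolding sector_def using measurable_sets[of "\<lambda>x::'a. x /\<^sub>R norm x" borel borel D] by simp

lemma emeasure_unif_sphere:
  assumes D: "D \<in> sets borel"
  shows "emeasure (unif_sphere :: 'a::euclidean_space measure) D
       = emeasure lborel (sector D \<inter> ball 0 1) / emeasure lborel (ball (0::'a) 1)"
  using sector_sets[OF D] D unfolding unif_sphere_def
  by (simp add: emeasure_distr emeasure_uniform_measure sector_def Int_commute)

lemma sector_inter_ball:
  assumes t: "t > 0"
  shows "sector D \<inter> ball 0 t = (\<lambda>x. t *\<^sub>R x + 0) ` (sector D \<inter> ball (0::'a::euclidean_space) 1)"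
proof -
  have dir: "(c *\<^sub>R x) /\<^sub>R norm (c *\<^sub>R x) = x /\<^sub>R norm x" if "c > 0" for c and x :: 'a
    using that by (cases "x = 0") auto
  show ?thesis
  proof (intro equalityI subsetI)
    fix x assume x: "x \<in> sector D \<inter> ball 0 t"
    have "x /\<^sub>R t \<in> sector D"
      unfolding sector_def vimage_def mem_Collect_eq
      by (subst dir) (use x t in \<open>simp_all add: sector_def\<close>)
    moreover have "norm (x /\<^sub>R t) < 1"
      using x t by (simp add: field_simps)
    ultimately have "x /\<^sub>R t \<in> sector D \<inter> ball 0 1"
      by simp
    moreover have "x = t *\<^sub>R (x /\<^sub>R t) + 0" using t by simp
    ultimately show "x \<in> (\<lambda>x. t *\<^sub>R x + 0) ` (sector D \<inter> ball 0 1)"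
      by blast
  next
    fix y assume "y \<in> (\<lambda>x. t *\<^sub>R x + 0) ` (sector D \<inter> ball (0::'a) 1)"
    then obtain x where x: "x \<in> sector D" "norm x < 1" and y: "y = t *\<^sub>R x" by auto
    have "y \<in> sector D"
      unfolding y sector_def vimage_def mem_Collect_eq
      by (subst dir[OF t]) (use x in \<open>simp add: sector_def\<close>)
    moreover have "norm y < t" using x t y by simp
    ultimately show "y \<in> sector D \<inter> ball 0 t" by simp
  qed
qed

lemma emeasure_lborel_sector_inter_ball_scaled:
  assumes D: "D \<in> sets borel" and t: "t > 0"
  shows "emeasure lborel (sector D \<inter> ball 0 t)
       = ennreal (t ^ DIM('a)) * emeasure lborel (sector D \<inter> ball (0::'a::euclidean_space) 1)"
proof -
  have "emeasure lborel (sector D \<inter> ball 0 t) = emeasure lebesgue (sector D \<inter> ball (0::'a) t)"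
    using D by (simp add: emeasure_lebesgue_borel)
  also have "\<dots> = emeasure lebesgue ((\<lambda>x. t *\<^sub>R x + 0) ` (sector D \<inter> ball (0::'a) 1))"
    by (simp only: sector_inter_ball[OF t])
  also have "\<dots> = ennreal (\<bar>t\<bar> ^ DIM('a)) * emeasure lebesgue (sector D \<inter> ball (0::'a) 1)"
    by (rule emeasure_lebesgue_affine)
  finally show ?thesis
    using D t by (simp add: emeasure_lebesgue_borel)
qed

lemma emeasure_lborel_sector_inter_ball:
  fixes D :: "'a::euclidean_space set"
  assumes D: "D \<in> sets borel"
  shows "emeasure lborel (sector D \<inter> ball 0 t) = emeasure unif_sphere D * emeasure lborel (ball (0::'a) t)"
proof (cases "t > 0")
  case False
  then have empty: "ball (0::'a) t = {}" by auto
  show ?thesis unfolding empty by simp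
next
  case True
  have ball: "emeasure lborel (ball (0::'a) t) = ennreal (t ^ DIM('a)) * emeasure lborel (ball (0::'a) 1)"
    using emeasure_lborel_sector_inter_ball_scaled[OF _ True, of UNIV] by (simp add: sector_def)
  have one: "emeasure lborel (ball (0::'a) 1) / emeasure lborel (ball (0::'a) 1) = 1"
    using emeasure_lborel_unit_ball_nonzero emeasure_lborel_unit_ball_finite
    by (intro ennreal_divide_self) (auto simp: top.not_eq_extremum)
  have "emeasure unif_sphere D * emeasure lborel (ball (0::'a) t)
      = ennreal (t ^ DIM('a)) * (emeasure lborel (sector D \<inter> ball 0 1)
          / emeasure lborel (ball (0::'a) 1) * emeasure lborel (ball (0::'a) 1))"
    by (simp add: emeasure_unif_sphere[OF D] ball ac_simps)
  also have "\<dots> = ennreal (t ^ DIM('a)) * emeasure lborel (sector D \<inter> ball (0::'a) 1)"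
    using one by (simp add: ennreal_divide_times)
  finally show ?thesis
    unfolding emeasure_lborel_sector_inter_ball_scaled[OF D True] by simp
qed

lemma distr_norm_sector:
  fixes D :: "'a::euclidean_space set"
  assumes D[measurable]: "D \<in> sets borel"
  shows "distr (density lborel (indicator (sector D))) borel norm
       = density (distr (lborel :: 'a measure) borel norm) (\<lambda>_. emeasure unif_sphere D)"
proof (rule measure_eqI_generator_eq[where E="range lessThan" and \<Omega>=UNIV and A="\<lambda>i. {..< real i}"])
  show "Int_stable (range lessThan :: real set set)"
  proof (unfold Int_stable_def, intro ballI)
    fix A B :: "real set" assume "A \<in> range lessThan" "B \<in> range lessThan"
    then obtain a b where "A = {..<a}" "B = {..<b}" by auto
    then show "A \<inter> B \<in> range lessThan"
      by (intro range_eqI[of _ _ "min a b"]) auto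
  qed
  show "sets (distr (density lborel (indicator (sector D))) borel norm) = sigma_sets UNIV (range lessThan)"
    by (simp add: borel_Iio)
  show "sets (density (distr (lborel :: 'a measure) borel norm) (\<lambda>_. emeasure unif_sphere D))
      = sigma_sets UNIV (range lessThan)"
    by (simp add: borel_Iio)
  show "(\<Union>i. {..< real i}) = (UNIV :: real set)"
    by (auto intro: reals_Archimedean2)
  have pre: "norm -` {..<t} = ball (0::'a) t" for t by auto
  have LHS: "emeasure (distr (density lborel (indicator (sector D))) borel norm) {..<t}
      = emeasure lborel (sector D \<inter> ball 0 t)" for t
    by (simp add: emeasure_distr pre emeasure_restricted)
  show "emeasure (distr (density lborel (indicator (sector D))) borel norm) {..< real i} \<noteq> \<infinity>" for i
  proof -
    have "emeasure lborel (sector D \<inter> ball (0::'a) (real i)) \<le> emeasure lborel (ball (0::'a) (real i))"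
      by (rule emeasure_mono) auto
    then show ?thesis
      using emeasure_lborel_ball_finite[of "0::'a" "real i"] by (auto simp: LHS top_unique)
  qed
  fix A :: "real set" assume "A \<in> range lessThan"
  then obtain t where A: "A = {..<t}" by auto
  have RHS: "emeasure (density (distr (lborel :: 'a measure) borel norm) (\<lambda>_. emeasure unif_sphere D)) {..<t}
      = emeasure unif_sphere D * emeasure lborel (ball (0::'a) t)"
    by (simp add: emeasure_density_const emeasure_distr pre)
  show "emeasure (distr (density lborel (indicator (sector D))) borel norm) A =
        emeasure (density (distr (lborel :: 'a measure) borel norm) (\<lambda>_. emeasure unif_sphere D)) A"
    unfolding A LHS RHS by (rule emeasure_lborel_sector_inter_ball[OF D])
qed auto

lemma nn_integral_sector:
  fixes D :: "'a::euclidean_space set" and h :: "real \<Rightarrow> ennreal"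
  assumes D[measurable]: "D \<in> sets borel" and h[measurable]: "h \<in> borel_measurable borel"
  shows "(\<integral>\<^sup>+x. h (norm x) * indicator (sector D) x \<partial>(lborel :: 'a measure))
       = emeasure unif_sphere D * (\<integral>\<^sup>+x. h (norm x) \<partial>(lborel :: 'a measure))"
proof -
  have "(\<integral>\<^sup>+x. h (norm x) * indicator (sector D) x \<partial>(lborel :: 'a measure))
      = (\<integral>\<^sup>+r. h r \<partial>distr (density lborel (indicator (sector D))) borel norm)"
    by (simp add: nn_integral_distr nn_integral_density mult.commute)
  also have "\<dots> = (\<integral>\<^sup>+r. emeasure unif_sphere D * h r \<partial>distr (lborel :: 'a measure) borel norm)"
    by (simp add: distr_norm_sector[OF D] nn_integral_density)
  finally show ?thesis
    by (simp add: nn_integral_cmult nn_integral_distr)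
qed

lemma gauss_vec_radius_direction_independent:
  assumes sg: "sg > 0"
  shows "distr (gauss_vec (0::'a::euclidean_space) sg) (borel \<Otimes>\<^sub>M borel) (\<lambda>x. (norm x, x /\<^sub>R norm x))
       = distr (gauss_vec (0::'a) sg) borel norm \<Otimes>\<^sub>M unif_sphere"
proof (rule pair_measure_eqI[symmetric])
  interpret G: prob_space "gauss_vec (0::'a) sg" using sg by (rule prob_space_gauss_vec)
  interpret R: prob_space "distr (gauss_vec (0::'a) sg) borel norm" by (rule G.prob_space_distr) simp
  interpret U: prob_space "unif_sphere :: 'a measure" by (rule prob_space_unif_sphere)
  show "sigma_finite_measure (distr (gauss_vec (0::'a) sg) borel norm)" by unfold_locales
  show "sigma_finite_measure (unif_sphere :: 'a measure)" by unfold_locales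
  show "sets (distr (gauss_vec (0::'a) sg) borel norm \<Otimes>\<^sub>M unif_sphere) =
        sets (distr (gauss_vec (0::'a) sg) (borel \<Otimes>\<^sub>M borel) (\<lambda>x. (norm x, x /\<^sub>R norm x)))"
    by (simp cong: sets_pair_measure_cong)
  fix A B
  assume "A \<in> sets (distr (gauss_vec (0::'a) sg) borel norm)" "B \<in> sets (unif_sphere :: 'a measure)"
  then have A[measurable]: "A \<in> sets borel" and B[measurable]: "B \<in> sets borel" by auto
  define h where "h r = ennreal ((2 * pi * sg\<^sup>2) powr (- real DIM('a) / 2) * exp (- r\<^sup>2 / (2 * sg\<^sup>2)))
    * indicator A r" for r :: real
  have [measurable]: "h \<in> borel_measurable borel" unfolding h_def by measurable
  have pre: "(\<lambda>x::'a. (norm x, x /\<^sub>R norm x)) -` (A \<times> B) = norm -` A \<inter> sector B"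
    by (auto simp: sector_def)
  have "emeasure (distr (gauss_vec (0::'a) sg) (borel \<Otimes>\<^sub>M borel) (\<lambda>x. (norm x, x /\<^sub>R norm x))) (A \<times> B)
      = (\<integral>\<^sup>+x. h (norm x) * indicator (sector B) x \<partial>(lborel :: 'a measure))"
    unfolding gauss_vec_eq_density
    by (simp add: emeasure_distr pre emeasure_density)
      (auto intro!: nn_integral_cong simp: h_def gauss_density_def split: split_indicator)
  also have "\<dots> = emeasure unif_sphere B * (\<integral>\<^sup>+x. h (norm x) \<partial>(lborel :: 'a measure))"
    by (rule nn_integral_sector) auto
  also have "(\<integral>\<^sup>+x. h (norm x) \<partial>(lborel :: 'a measure)) = emeasure (distr (gauss_vec (0::'a) sg) borel norm) A"
  proof -
    have "norm -` A \<in> sets (lborel :: 'a measure)"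
      using measurable_sets[OF borel_measurable_norm A] by simp
    then show ?thesis
      unfolding gauss_vec_eq_density
      by (simp add: emeasure_distr emeasure_density)
        (auto intro!: nn_integral_cong simp: h_def gauss_density_def split: split_indicator)
  qed
  finally show "emeasure (distr (gauss_vec (0::'a) sg) borel norm) A * emeasure unif_sphere B =
      emeasure (distr (gauss_vec (0::'a) sg) (borel \<Otimes>\<^sub>M borel) (\<lambda>x. (norm x, x /\<^sub>R norm x))) (A \<times> B)"
    by (simp add: mult.commute)
qed

lemma nn_integral_gauss_vec_polar:
  fixes f :: "real \<times> 'a::euclidean_space \<Rightarrow> ennreal"
  assumes sg: "sg > 0" and f[measurable]: "f \<in> borel_measurable (borel \<Otimes>\<^sub>M borel)"
  shows "(\<integral>\<^sup>+x. f (norm x, x /\<^sub>R norm x) \<partial>gauss_vec (0::'a) sg)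
       = (\<integral>\<^sup>+r. \<integral>\<^sup>+\<theta>. f (r, \<theta>) \<partial>unif_sphere \<partial>distr (gauss_vec (0::'a) sg) borel norm)"
proof -
  interpret U: prob_space "unif_sphere :: 'a measure" by (rule prob_space_unif_sphere)
  have "(\<integral>\<^sup>+x. f (norm x, x /\<^sub>R norm x) \<partial>gauss_vec (0::'a) sg)
      = (\<integral>\<^sup>+z. f z \<partial>distr (gauss_vec (0::'a) sg) (borel \<Otimes>\<^sub>M borel) (\<lambda>x. (norm x, x /\<^sub>R norm x)))"
    by (subst nn_integral_distr) auto
  also have "\<dots> = (\<integral>\<^sup>+z. f z \<partial>(distr (gauss_vec (0::'a) sg) borel norm \<Otimes>\<^sub>M unif_sphere))"
    by (simp add: gauss_vec_radius_direction_independent[OF sg])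
  also have "\<dots> = (\<integral>\<^sup>+r. \<integral>\<^sup>+\<theta>. f (r, \<theta>) \<partial>unif_sphere \<partial>distr (gauss_vec (0::'a) sg) borel norm)"
    by (rule U.nn_integral_fst[symmetric]) simp
  finally show ?thesis .
qed

text \<open>The radius of a centred Gaussian is independent of its uniformly distributed direction,
  so the direction can be interchanged with an independent uniform unit vector.\<close>

lemma nn_integral_gauss_vec_exchange_direction:
  fixes f :: "'a::euclidean_space \<times> 'a \<Rightarrow> ennreal"
  assumes sg: "sg > 0" and f[measurable]: "f \<in> borel_measurable (borel \<Otimes>\<^sub>M borel)"
  shows "(\<integral>\<^sup>+z. f (norm (fst z) *\<^sub>R snd z, fst z /\<^sub>R norm (fst z)) \<partial>(gauss_vec (0::'a) sg \<Otimes>\<^sub>M unif_sphere))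
       = (\<integral>\<^sup>+z. f z \<partial>(gauss_vec (0::'a) sg \<Otimes>\<^sub>M unif_sphere))"
proof -
  interpret U: prob_space "unif_sphere :: 'a measure" by (rule prob_space_unif_sphere)
  interpret UU: pair_sigma_finite "unif_sphere :: 'a measure" "unif_sphere :: 'a measure" by unfold_locales
  let ?R = "distr (gauss_vec (0::'a) sg) borel norm"
  have "(\<integral>\<^sup>+z. f (norm (fst z) *\<^sub>R snd z, fst z /\<^sub>R norm (fst z)) \<partial>(gauss_vec (0::'a) sg \<Otimes>\<^sub>M unif_sphere))
      = (\<integral>\<^sup>+g. \<integral>\<^sup>+w. f (norm g *\<^sub>R w, g /\<^sub>R norm g) \<partial>unif_sphere \<partial>gauss_vec (0::'a) sg)"
    using U.nn_integral_fst[of "\<lambda>(g, w). f (norm g *\<^sub>R w, g /\<^sub>R norm g)" "gauss_vec (0::'a) sg"]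
    by (simp add: split_beta')
  also have "\<dots> = (\<integral>\<^sup>+r. \<integral>\<^sup>+\<theta>. \<integral>\<^sup>+w. f (r *\<^sub>R w, \<theta>) \<partial>unif_sphere \<partial>unif_sphere \<partial>?R)"
    using nn_integral_gauss_vec_polar[OF sg, of "\<lambda>(r, \<theta>). \<integral>\<^sup>+w. f (r *\<^sub>R w, \<theta>) \<partial>unif_sphere"]
    by simp
  also have "\<dots> = (\<integral>\<^sup>+r. \<integral>\<^sup>+w. \<integral>\<^sup>+\<theta>. f (r *\<^sub>R w, \<theta>) \<partial>unif_sphere \<partial>unif_sphere \<partial>?R)"
  proof (rule nn_integral_cong)
    fix r :: real
    show "(\<integral>\<^sup>+\<theta>. \<integral>\<^sup>+w. f (r *\<^sub>R w, \<theta>) \<partial>unif_sphere \<partial>unif_sphere)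
        = (\<integral>\<^sup>+w. \<integral>\<^sup>+\<theta>. f (r *\<^sub>R w, \<theta>) \<partial>unif_sphere \<partial>unif_sphere)"
      using UU.Fubini[of "\<lambda>(w, \<theta>). f (r *\<^sub>R w, \<theta>)"] by simp
  qed
  also have "\<dots> = (\<integral>\<^sup>+g. \<integral>\<^sup>+w. f (norm g *\<^sub>R (g /\<^sub>R norm g), w) \<partial>unif_sphere \<partial>gauss_vec (0::'a) sg)"
    using nn_integral_gauss_vec_polar[OF sg, of "\<lambda>(r, \<theta>). \<integral>\<^sup>+w. f (r *\<^sub>R \<theta>, w) \<partial>unif_sphere"]
    by simp
  also have "\<dots> = (\<integral>\<^sup>+g. \<integral>\<^sup>+w. f (g, w) \<partial>unif_sphere \<partial>gauss_vec (0::'a) sg)"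
  proof -
    have "norm g *\<^sub>R (g /\<^sub>R norm g) = g" for g :: 'a by (cases "g = 0") auto
    then show ?thesis by simp
  qed
  also have "\<dots> = (\<integral>\<^sup>+z. f z \<partial>(gauss_vec (0::'a) sg \<Otimes>\<^sub>M unif_sphere))"
    by (rule U.nn_integral_fst) simp
  finally show ?thesis .
qed

lemma AE_gauss_vec_notin_proper_subspace:
  fixes S :: "'a::euclidean_space set"
  assumes "subspace S" "S \<noteq> UNIV"
  shows "AE x in gauss_vec mu sg. x \<notin> S"
proof -
  have "dim S \<noteq> DIM('a)"
    by (metis assms dim_eq_full span_eq_iff)
  then have "negligible S"
    using dim_subset_UNIV[of S] by (intro negligible_lowdim) simp
  moreover have "S \<in> sets borel"
    using closed_subspace[OF assms(1)] by (simp add: borel_closed)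
  ultimately have "S \<in> null_sets lborel"
    by (simp add: negligible_iff_null_sets null_sets_completion_iff)
  then show ?thesis
    unfolding gauss_vec_eq_density by (subst AE_density) (auto elim: AE_mp[OF AE_not_in])
qed

section \<open>Projections in the regression model\<close>

declare transpose_matrix_vector [simp del]

lemma inner_matrix_vector_mult: "(A *v x) \<bullet> y = x \<bullet> (transpose A *v y)"
  for A :: "real^'m::finite^'n::finite"
  unfolding inner_vec_def matrix_vector_mult_def transpose_def
  by (simp add: sum_distrib_left sum_distrib_right ac_simps) (rule sum.swap)

lemma matrix_vector_mult_measurable [measurable]:
  "(\<lambda>x. A *v x) \<in> borel_measurable borel" for A :: "real^'m::finite^'n::finite"
  by (rule borel_measurable_linear[OF matrix_vector_mul_linear])

lemma power2_norm_add: "(norm (a + b))\<^sup>2 = (norm a)\<^sup>2 + 2 * (a \<bullet> b) + (norm b)\<^sup>2"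
  for a b :: "'a::real_inner"
  by (simp add: power2_norm_eq_inner inner_add_left inner_add_right inner_commute[of b a])

lemma argmin_add_const: "argmin (\<lambda>x. f x + c) = argmin f"
  by (simp add: argmin_def)

locale orth_complement =
  fixes X :: "real^('k::{finite,linorder} + 'p::finite)^'n::finite"
    and V :: "real^'m::finite^'n"
  assumes V_orth: "transpose V ** V = mat 1"
    and V_span: "range (\<lambda>c. V *v c) = {x. \<forall>q. inner (column (Inr q) X) x = 0}"
begin

definition cols2 :: "(real^'n) set" where
  "cols2 = {column (Inr q) X | q. True}"

lemma transpose_V_V [simp]: "transpose V *v (V *v t) = t"
  by (simp add: matrix_vector_mul_assoc V_orth)

lemma norm_V [simp]: "norm (V *v t) = norm t"
  by (simp add: norm_eq_sqrt_inner inner_matrix_vector_mult)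

lemma inner_V_span_cols2: "c \<in> span cols2 \<Longrightarrow> (V *v t) \<bullet> c = 0"
proof -
  have "orthogonal c (V *v t)" if "c \<in> cols2" for c
    using that rangeI[of "\<lambda>c. V *v c" t] unfolding V_span by (auto simp: cols2_def orthogonal_def)
  then show "c \<in> span cols2 \<Longrightarrow> (V *v t) \<bullet> c = 0"
    using orthogonal_to_span[of c cols2 "V *v t"] by (auto simp: orthogonal_def inner_commute)
qed

lemma transpose_V_span_cols2:
  assumes "c \<in> span cols2"
  shows "transpose V *v c = 0"
proof -
  have "(transpose V *v c) \<bullet> (transpose V *v c) = 0"
    using inner_V_span_cols2[OF assms, of "transpose V *v c"] by (simp only: inner_matrix_vector_mult)
  then show ?thesis by simp
qed

lemma Pk_eq: "Pk X y = y - V *v (transpose V *v y)"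
proof -
  define p where "p = y - V *v (transpose V *v y)"
  have orth: "(y - p) \<bullet> c = 0" if "c \<in> cols2" for c
    using inner_V_span_cols2[OF span_base[OF that]] by (simp add: p_def)
  have span: "p \<in> span cols2"
  proof -
    obtain a z where a: "a \<in> span cols2" and z: "\<And>w. w \<in> span cols2 \<Longrightarrow> orthogonal z w"
      and y: "y = a + z"
      by (rule orthogonal_subspace_decomp_exists[where S=cols2 and x=y]) blast
    have "z \<bullet> column (Inr q) X = 0" for q
      using z[OF span_base, of "column (Inr q) X"] by (auto simp: orthogonal_def cols2_def)
    then have "z \<in> range (\<lambda>c. V *v c)"
      unfolding V_span by (simp add: inner_commute)
    then obtain t where t: "z = V *v t" by auto
    have "p = a"
      using transpose_V_span_cols2[OF a] by (simp add: p_def y t matrix_vector_right_distrib)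
    then show ?thesis using a by simp
  qed
  have "oproj cols2 y = p"
    unfolding oproj_def
  proof (rule the_equality)
    show "p \<in> span cols2 \<and> (\<forall>c\<in>cols2. (y - p) \<bullet> c = 0)" using span orth by blast
    fix p' assume p': "p' \<in> span cols2 \<and> (\<forall>c\<in>cols2. (y - p') \<bullet> c = 0)"
    have "orthogonal (p' - p) c" if "c \<in> cols2" for c
      using p' orth[OF that] that by (simp add: orthogonal_def inner_diff_left)
    then have "orthogonal (p' - p) (p' - p)"
      using orthogonal_to_span[of "p' - p" cols2 "p' - p"] p' span by (simp add: span_diff)
    then show "p' = p" by (simp add: orthogonal_def)
  qed
  then show ?thesis by (simp add: Pk_def cols2_def p_def)
qed

lemma linear_Pk: "linear (Pk X)"
proof -
  have "Pk X = (\<lambda>y. y - V *v (transpose V *v y))" by (simp add: fun_eq_iff Pk_eq)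
  then show ?thesis
    by (simp add: linear_compose_sub linear_id[unfolded id_def]
        linear_compose[unfolded o_def, OF matrix_vector_mul_linear matrix_vector_mul_linear])
qed

lemma Pk_measurable [measurable]: "Pk X \<in> borel_measurable borel"
  by (rule borel_measurable_linear[OF linear_Pk])

lemma transpose_V_Pk [simp]: "transpose V *v Pk X y = 0"
  by (simp add: Pk_eq matrix_vector_mult_diff_distrib)

lemma Pk_add_V [simp]: "Pk X (y + V *v t) = Pk X y"
  by (simp add: Pk_eq matrix_vector_right_distrib)

lemma Pk_Pk [simp]: "Pk X (Pk X y) = Pk X y"
  by (simp add: Pk_eq matrix_vector_mult_diff_distrib)

lemma Pk_add_V_transpose_V: "Pk X y + V *v (transpose V *v y) = y"
  by (simp add: Pk_eq)

lemma norm_Pk_add_V: "(norm (Pk X y + V *v t))\<^sup>2 = (norm (Pk X y))\<^sup>2 + (norm t)\<^sup>2"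
proof -
  have "orthogonal (Pk X y) (V *v t)"
    by (simp add: orthogonal_def inner_commute[of "Pk X y"] inner_matrix_vector_mult)
  then show ?thesis by (simp add: norm_add_Pythagorean)
qed

lemma yhat_eq: "yhat X y = Pk X y"
  by (simp add: yhat_def)

lemma sighat_eq: "sighat X y = norm (transpose V *v y)"
  by (simp add: sighat_def yhat_eq Pk_eq)

lemma X2_in_span_cols2: "X2 X *v g \<in> span cols2"
proof -
  have "columns (X2 X) \<subseteq> cols2"
    by (auto simp: columns_def cols2_def column_def X2_def)
  then show ?thesis
    using matrix_vector_mult_in_columnspace[of "X2 X" g] span_mono by blast
qed

lemma mean_in_span_cols2:
  assumes "\<forall>i. beta $ Inl i = 0"
  shows "X *v beta \<in> span cols2"
proof -
  have "X *v beta = (\<Sum>i\<in>UNIV. beta $ i *\<^sub>R column i X)"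
    by (simp add: matrix_mult_sum scalar_mult_eq_scaleR)
  also have "\<dots> \<in> span cols2"
  proof (rule span_sum)
    fix i :: "'k + 'p"
    show "beta $ i *\<^sub>R column i X \<in> span cols2"
    proof (cases i)
      case (Inl a)
      then show ?thesis using assms by (simp add: span_zero)
    next
      case (Inr q)
      then show ?thesis by (intro span_scale span_base) (auto simp: cols2_def)
    qed
  qed
  finally show ?thesis .
qed

text \<open>Moving y orthogonally to the columns of X_{-1:k} changes the lasso objective only by a
  constant.\<close>

lemma lasso_rest_cong:
  assumes "Pk X y' = Pk X y"
  shows "lasso_rest X y' = lasso_rest X y"
proof (intro ext)
  fix lam b
  define d where "d = y' - y"
  have d: "d = V *v (transpose V *v y' - transpose V *v y)"
    using Pk_add_V_transpose_V[of y] Pk_add_V_transpose_V[of y'] assms unfolding d_def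
    by (metis add_diff_cancel_left matrix_vector_mult_diff_distrib)
  have orth: "(X2 X *v g) \<bullet> d = 0" for g
    unfolding d by (subst inner_commute) (rule inner_V_span_cols2[OF X2_in_span_cols2])
  define c where "c = 2 * ((y - X1 X *v b) \<bullet> d) + (norm d)\<^sup>2"
  have sq: "(norm (y' - X1 X *v b - X2 X *v g))\<^sup>2 = (norm (y - X1 X *v b - X2 X *v g))\<^sup>2 + c" for g
  proof -
    have shift: "y' - X1 X *v b - X2 X *v g = (y - X1 X *v b - X2 X *v g) + d"
      by (simp add: d_def)
    have "(y - X1 X *v b - X2 X *v g) \<bullet> d = (y - X1 X *v b) \<bullet> d"
      using orth[of g] by (simp add: inner_diff_left)
    then show ?thesis
      unfolding shift power2_norm_add c_def by simp
  qed
  have "(\<lambda>g. (1 / (2 * real CARD('n))) * (norm (y' - X1 X *v b - X2 X *v g))\<^sup>2 + lam * l1norm g)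
      = (\<lambda>g. ((1 / (2 * real CARD('n))) * (norm (y - X1 X *v b - X2 X *v g))\<^sup>2 + lam * l1norm g)
             + c / (2 * real CARD('n)))"
    by (simp add: sq fun_eq_iff add_divide_distrib ac_simps)
  then show "lasso_rest X y' lam b = lasso_rest X y lam b"
    unfolding lasso_rest_def by (simp only: argmin_add_const)
qed

lemma Lstat_cong:
  assumes "Pk X y' = Pk X y" and "sighat X y' = sighat X y"
  shows "Lstat X y' = Lstat X y"
proof -
  have rest: "lasso_rest X y' = lasso_rest X y" using assms(1) by (rule lasso_rest_cong)
  then have active: "active X y' = active X y" by (simp add: active_def[abs_def])
  have "Pk X (y' - w) = Pk X (y - w)" for w
    using assms(1) by (simp add: linear_diff[OF linear_Pk])
  then have "betacheck X y' = betacheck X y"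
    by (simp add: fun_eq_iff betacheck_def rest active diff_diff_eq)
  then show ?thesis
    by (simp add: fun_eq_iff Lstat_def nuvec_def Amat_def assms(2) active)
qed

lemma AE_gauss_vec_transpose_V_nonzero: "AE y in gauss_vec mu sg. transpose V *v y \<noteq> 0"
proof -
  have "subspace {y. transpose V *v y = 0}"
    by (auto simp: subspace_def matrix_vector_right_distrib matrix_vector_mult_scaleR)
  moreover have "{y. transpose V *v y = 0} \<noteq> UNIV"
  proof
    assume "{y. transpose V *v y = 0} = UNIV"
    then have "transpose V *v (V *v 1) = 0" by blast
    then show False by simp
  qed
  ultimately show ?thesis
    using AE_gauss_vec_notin_proper_subspace[of "{y. transpose V *v y = 0}" mu sg] by simp
qed

definition exchange_complement :: "(real^'n) \<times> (real^'m) \<Rightarrow> (real^'n) \<times> (real^'m)" where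
  "exchange_complement z = (Pk X (fst z) + V *v snd z, transpose V *v fst z)"

lemma linear_exchange_complement: "linear exchange_complement"
  unfolding linear_iff exchange_complement_def
  using linear_add[OF linear_Pk] linear_scale[OF linear_Pk]
  by (auto simp: matrix_vector_right_distrib matrix_vector_mult_scaleR scaleR_right_distrib)

lemma norm_exchange_complement: "norm (exchange_complement z) = norm z"
proof -
  obtain y g where z: "z = (y, g)" by (cases z)
  have "(norm (exchange_complement z))\<^sup>2 = (norm (Pk X y))\<^sup>2 + (norm g)\<^sup>2 + (norm (transpose V *v y))\<^sup>2"
    by (simp add: exchange_complement_def z norm_Pair norm_Pk_add_V)
  also have "\<dots> = (norm z)\<^sup>2"
    using norm_Pk_add_V[of y "transpose V *v y"]
    by (simp add: z norm_Pair Pk_add_V_transpose_V)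
  finally show ?thesis by (simp add: power2_eq_iff_nonneg)
qed

lemma nn_integral_exchange_complement:
  assumes mu: "mu \<in> span cols2" and sg: "sg > 0"
    and f[measurable]: "f \<in> borel_measurable (borel \<Otimes>\<^sub>M borel)"
  shows "(\<integral>\<^sup>+z. f (exchange_complement z) \<partial>(gauss_vec mu sg \<Otimes>\<^sub>M gauss_vec 0 sg))
       = (\<integral>\<^sup>+z. f z \<partial>(gauss_vec mu sg \<Otimes>\<^sub>M gauss_vec (0::real^'m) sg))"
proof -
  have [measurable]: "f \<in> borel_measurable borel" "exchange_complement \<in> borel_measurable borel"
    using f borel_measurable_linear[OF linear_exchange_complement] by (simp_all add: borel_prod)
  have "exchange_complement (mu, 0) = (mu, 0)"
    using transpose_V_span_cols2[OF mu] by (simp add: exchange_complement_def Pk_eq)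
  then have "distr (gauss_vec (mu, 0::real^'m) sg) borel exchange_complement = gauss_vec (mu, 0) sg"
    by (rule distr_gauss_vec_linear_isometry[OF linear_exchange_complement norm_exchange_complement])
  moreover have "(\<integral>\<^sup>+z. f (exchange_complement z) \<partial>gauss_vec (mu, 0::real^'m) sg)
      = (\<integral>\<^sup>+z. f z \<partial>distr (gauss_vec (mu, 0::real^'m) sg) borel exchange_complement)"
    by (subst nn_integral_distr) auto
  ultimately show ?thesis
    by (simp add: gauss_vec_pair_measure[OF sg])
qed

definition exchange_direction :: "(real^'n) \<times> (real^'m) \<Rightarrow> (real^'n) \<times> (real^'m)" where
  "exchange_direction z =
     (Pk X (fst z) + norm (transpose V *v fst z) *\<^sub>R (V *v snd z),
      (transpose V *v fst z) /\<^sub>R norm (transpose V *v fst z))"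

lemma exchange_direction_measurable [measurable]:
  "exchange_direction \<in> (borel \<Otimes>\<^sub>M borel) \<rightarrow>\<^sub>M (borel \<Otimes>\<^sub>M borel)"
  unfolding exchange_direction_def by measurable

text \<open>An auxiliary Gaussian g in the coordinates of V, exchanged with V^T y by an isometry
  fixing the mean, reduces the claim to the centred case.\<close>

lemma nn_integral_exchange_direction:
  assumes mu: "mu \<in> span cols2" and sg: "sg > 0"
    and f[measurable]: "f \<in> borel_measurable (borel \<Otimes>\<^sub>M borel)"
  shows "(\<integral>\<^sup>+z. f (exchange_direction z) \<partial>(gauss_vec mu sg \<Otimes>\<^sub>M (unif_sphere :: (real^'m) measure)))
       = (\<integral>\<^sup>+z. f z \<partial>(gauss_vec mu sg \<Otimes>\<^sub>M (unif_sphere :: (real^'m) measure)))"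
proof -
  interpret N: prob_space "gauss_vec mu sg" using sg by (rule prob_space_gauss_vec)
  interpret G: prob_space "gauss_vec (0::real^'m) sg" using sg by (rule prob_space_gauss_vec)
  interpret U: prob_space "unif_sphere :: (real^'m) measure" by (rule prob_space_unif_sphere)
  let ?N = "gauss_vec mu sg" and ?G = "gauss_vec (0::real^'m) sg" and ?U = "unif_sphere :: (real^'m) measure"
  define F where "F y = (\<integral>\<^sup>+w. f (exchange_direction (y, w)) \<partial>?U)" for y
  define H where "H y = (\<integral>\<^sup>+w. f (y, w) \<partial>?U)" for y
  have [measurable]: "F \<in> borel_measurable borel" "H \<in> borel_measurable borel"
    unfolding F_def H_def by measurable
  have G_UNIV: "emeasure ?G UNIV = 1"
    using G.emeasure_space_1 by simp
  have "(\<integral>\<^sup>+z. f (exchange_direction z) \<partial>(?N \<Otimes>\<^sub>M ?U)) = (\<integral>\<^sup>+z. F (fst z) \<partial>(?N \<Otimes>\<^sub>M ?G))"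
    unfolding F_def
    using U.nn_integral_fst[of "\<lambda>z. f (exchange_direction z)" ?N] G.nn_integral_fst[of "\<lambda>z. F (fst z)" ?N]
    by (simp add: F_def G_UNIV)
  also have "\<dots> = (\<integral>\<^sup>+z. F (fst (exchange_complement z)) \<partial>(?N \<Otimes>\<^sub>M ?G))"
    by (rule nn_integral_exchange_complement[OF mu sg, symmetric]) simp
  also have "\<dots> = (\<integral>\<^sup>+y. \<integral>\<^sup>+g. F (Pk X y + V *v g) \<partial>?G \<partial>?N)"
    using G.nn_integral_fst[of "\<lambda>z. F (fst (exchange_complement z))" ?N]
    by (simp add: exchange_complement_def)
  also have "\<dots> = (\<integral>\<^sup>+y. \<integral>\<^sup>+g. H (Pk X y + V *v g) \<partial>?G \<partial>?N)"
  proof (rule nn_integral_cong)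
    fix y
    define h where "h z = f (Pk X y + V *v fst z, snd z)" for z
    have [measurable]: "h \<in> borel_measurable (borel \<Otimes>\<^sub>M borel)" unfolding h_def by measurable
    have "F (Pk X y + V *v g) = (\<integral>\<^sup>+w. h (norm g *\<^sub>R w, g /\<^sub>R norm g) \<partial>?U)" for g
      unfolding F_def h_def
      by (simp add: exchange_direction_def matrix_vector_right_distrib matrix_vector_mult_scaleR)
    then have "(\<integral>\<^sup>+g. F (Pk X y + V *v g) \<partial>?G)
        = (\<integral>\<^sup>+z. h (norm (fst z) *\<^sub>R snd z, fst z /\<^sub>R norm (fst z)) \<partial>(?G \<Otimes>\<^sub>M ?U))"
      using U.nn_integral_fst[of "\<lambda>z. h (norm (fst z) *\<^sub>R snd z, fst z /\<^sub>R norm (fst z))" ?G] by simp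
    also have "\<dots> = (\<integral>\<^sup>+z. h z \<partial>(?G \<Otimes>\<^sub>M ?U))"
      by (rule nn_integral_gauss_vec_exchange_direction[OF sg]) simp
    also have "\<dots> = (\<integral>\<^sup>+g. H (Pk X y + V *v g) \<partial>?G)"
      unfolding H_def h_def using U.nn_integral_fst[of "\<lambda>z. f (Pk X y + V *v fst z, snd z)" ?G] by simp
    finally show "(\<integral>\<^sup>+g. F (Pk X y + V *v g) \<partial>?G) = (\<integral>\<^sup>+g. H (Pk X y + V *v g) \<partial>?G)" .
  qed
  also have "\<dots> = (\<integral>\<^sup>+z. H (fst (exchange_complement z)) \<partial>(?N \<Otimes>\<^sub>M ?G))"
    using G.nn_integral_fst[of "\<lambda>z. H (fst (exchange_complement z))" ?N]
    by (simp add: exchange_complement_def)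
  also have "\<dots> = (\<integral>\<^sup>+z. H (fst z) \<partial>(?N \<Otimes>\<^sub>M ?G))"
    by (rule nn_integral_exchange_complement[OF mu sg]) simp
  also have "\<dots> = (\<integral>\<^sup>+z. f z \<partial>(?N \<Otimes>\<^sub>M ?U))"
    using G.nn_integral_fst[of "\<lambda>z. H (fst z)" ?N] U.nn_integral_fst[of f ?N]
    by (simp add: H_def G_UNIV)
  finally show ?thesis .
qed

end

section \<open>Exchangeability of the Monte Carlo draws\<close>

lemma measurable_fun_upd_component:
  assumes "j \<in> I" "f \<in> L \<rightarrow>\<^sub>M PiM (I - {j}) M" "g \<in> L \<rightarrow>\<^sub>M M j"
  shows "(\<lambda>\<omega>. (f \<omega>)(j := g \<omega>)) \<in> L \<rightarrow>\<^sub>M PiM I M"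
  by (rule measurable_fun_upd[OF _ assms(2,3)]) (use assms(1) in auto)

lemma (in product_prob_space) nn_integral_PiM_fun_upd:
  assumes "j \<in> I" "finite I" "f \<in> borel_measurable (PiM I M)"
  shows "(\<integral>\<^sup>+x. f x \<partial>PiM I M) = (\<integral>\<^sup>+x. \<integral>\<^sup>+w. f (x(j := w)) \<partial>M j \<partial>PiM (I - {j}) M)"
proof -
  have "insert j (I - {j}) = I" using assms(1) by auto
  then show ?thesis
    using product_nn_integral_insert[of "I - {j}" j f] assms(2,3) by simp
qed

lemma nn_integral_pair_PiM_component:
  fixes N :: "'a measure" and U :: "'b measure"
  assumes N: "prob_space N" and U: "prob_space U" and j: "j \<in> I" and I: "finite I"
    and h[measurable]: "h \<in> borel_measurable (N \<Otimes>\<^sub>M (U \<Otimes>\<^sub>M PiM I (\<lambda>_. U)))"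
  shows "(\<integral>\<^sup>+\<omega>. h \<omega> \<partial>(N \<Otimes>\<^sub>M (U \<Otimes>\<^sub>M PiM I (\<lambda>_. U))))
       = (\<integral>\<^sup>+ut. \<integral>\<^sup>+x. \<integral>\<^sup>+z. h (fst z, ut, x(j := snd z)) \<partial>(N \<Otimes>\<^sub>M U) \<partial>PiM (I - {j}) (\<lambda>_. U) \<partial>U)"
proof -
  interpret N: prob_space N by (rule N)
  interpret U: prob_space U by (rule U)
  interpret P: product_prob_space "\<lambda>_. U" by unfold_locales
  let ?P = "PiM I (\<lambda>_. U)" and ?PI = "PiM (I - {j}) (\<lambda>_. U)"
  interpret PI: prob_space ?PI by (rule prob_space_PiM) (rule U)
  interpret UP: prob_space "U \<Otimes>\<^sub>M ?P" by (rule prob_space_pair) unfold_locales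
  interpret NU: pair_sigma_finite N U by unfold_locales
  interpret NPI: pair_sigma_finite N ?PI by unfold_locales
  have sfP: "sigma_finite_measure ?P"
    by (rule prob_space_imp_sigma_finite, rule prob_space_PiM, rule U)
  note upd = measurable_fun_upd_component[OF j]
  have "(\<integral>\<^sup>+\<omega>. h \<omega> \<partial>(N \<Otimes>\<^sub>M (U \<Otimes>\<^sub>M ?P))) = (\<integral>\<^sup>+y. \<integral>\<^sup>+v. h (y, v) \<partial>(U \<Otimes>\<^sub>M ?P) \<partial>N)"
    by (rule UP.nn_integral_fst[symmetric]) simp
  also have "\<dots> = (\<integral>\<^sup>+y. \<integral>\<^sup>+ut. \<integral>\<^sup>+us. h (y, ut, us) \<partial>?P \<partial>U \<partial>N)"
    by (rule nn_integral_cong, rule sigma_finite_measure.nn_integral_fst[OF sfP, symmetric]) simp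
  also have "\<dots> = (\<integral>\<^sup>+y. \<integral>\<^sup>+ut. \<integral>\<^sup>+x. \<integral>\<^sup>+w. h (y, ut, x(j := w)) \<partial>U \<partial>?PI \<partial>U \<partial>N)"
    by (intro nn_integral_cong P.nn_integral_PiM_fun_upd[OF j I]) measurable
  also have "\<dots> = (\<integral>\<^sup>+ut. \<integral>\<^sup>+y. \<integral>\<^sup>+x. \<integral>\<^sup>+w. h (y, ut, x(j := w)) \<partial>U \<partial>?PI \<partial>N \<partial>U)"
  proof -
    have [measurable]: "(\<lambda>x. (snd (fst x))(j := snd x)) \<in> ((N \<Otimes>\<^sub>M U) \<Otimes>\<^sub>M ?PI) \<Otimes>\<^sub>M U \<rightarrow>\<^sub>M ?P"
      by (rule upd) measurable
    have "(\<lambda>(y, ut). \<integral>\<^sup>+x. \<integral>\<^sup>+w. h (y, ut, x(j := w)) \<partial>U \<partial>?PI) \<in> borel_measurable (N \<Otimes>\<^sub>M U)"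
      by measurable
    from NU.Fubini[OF this] show ?thesis by simp
  qed
  also have "\<dots> = (\<integral>\<^sup>+ut. \<integral>\<^sup>+x. \<integral>\<^sup>+y. \<integral>\<^sup>+w. h (y, ut, x(j := w)) \<partial>U \<partial>N \<partial>?PI \<partial>U)"
  proof (rule nn_integral_cong)
    fix ut assume [measurable]: "ut \<in> space U"
    have [measurable]: "(\<lambda>x. (snd (fst x))(j := snd x)) \<in> (N \<Otimes>\<^sub>M ?PI) \<Otimes>\<^sub>M U \<rightarrow>\<^sub>M ?P"
      by (rule upd) measurable
    have "(\<lambda>(y, x). \<integral>\<^sup>+w. h (y, ut, x(j := w)) \<partial>U) \<in> borel_measurable (N \<Otimes>\<^sub>M ?PI)"
      by measurable
    from NPI.Fubini[OF this]
    show "(\<integral>\<^sup>+y. \<integral>\<^sup>+x. \<integral>\<^sup>+w. h (y, ut, x(j := w)) \<partial>U \<partial>?PI \<partial>N)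
        = (\<integral>\<^sup>+x. \<integral>\<^sup>+y. \<integral>\<^sup>+w. h (y, ut, x(j := w)) \<partial>U \<partial>N \<partial>?PI)"
      by simp
  qed
  also have "\<dots> = (\<integral>\<^sup>+ut. \<integral>\<^sup>+x. \<integral>\<^sup>+z. h (fst z, ut, x(j := snd z)) \<partial>(N \<Otimes>\<^sub>M U) \<partial>?PI \<partial>U)"
  proof (intro nn_integral_cong)
    fix ut x assume [measurable]: "ut \<in> space U" "x \<in> space ?PI"
    have [measurable]: "(\<lambda>z. x(j := snd z)) \<in> N \<Otimes>\<^sub>M U \<rightarrow>\<^sub>M ?P"
      by (rule upd) measurable
    show "(\<integral>\<^sup>+y. \<integral>\<^sup>+w. h (y, ut, x(j := w)) \<partial>U \<partial>N) = (\<integral>\<^sup>+z. h (fst z, ut, x(j := snd z)) \<partial>(N \<Otimes>\<^sub>M U))"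
      by (rule U.nn_integral_fst[of "\<lambda>z. h (fst z, ut, x(j := snd z))", simplified]) measurable
  qed
  finally show ?thesis .
qed

text \<open>Among the elements in question, the one with the smallest value of l sees all the
  others ranked at least as high as itself.\<close>

lemma card_low_ranks_le:
  fixes l :: "'a \<Rightarrow> real"
  assumes S: "finite S" and c: "c \<ge> 0"
  shows "real (card {k \<in> S. real (card {i \<in> S. l k \<le> l i}) \<le> c}) \<le> c"
proof (cases "{k \<in> S. real (card {i \<in> S. l k \<le> l i}) \<le> c} = {}")
  case True
  show ?thesis using c unfolding True by simp
next
  case False
  define K where "K = {k \<in> S. real (card {i \<in> S. l k \<le> l i}) \<le> c}"
  have "finite K" "K \<noteq> {}" using S False by (simp_all add: K_def)
  then have "Min (l ` K) \<in> l ` K" by simp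
  then obtain k0 where k0: "k0 \<in> K" and k0_min: "l k0 = Min (l ` K)" by auto
  have min: "\<forall>k\<in>K. l k0 \<le> l k" using \<open>finite K\<close> k0_min by simp
  have "K \<subseteq> {i \<in> S. l k0 \<le> l i}" using min by (auto simp: K_def)
  then have "card K \<le> card {i \<in> S. l k0 \<le> l i}" using S by (intro card_mono) auto
  moreover have "real (card {i \<in> S. l k0 \<le> l i}) \<le> c" using k0 by (simp add: K_def)
  ultimately show ?thesis unfolding K_def[symmetric] by linarith
qed

lemma card_exchange_rank:
  fixes l :: "nat \<Rightarrow> real"
  assumes j: "j \<le> M"
  shows "1 + card {i \<in> {1..M}. l j \<le> (if i = j then l 0 else l i)} = card {i \<in> {0..M}. l j \<le> l i}"
proof -
  define A where "A = {i \<in> {1..M}. l j \<le> (if i = j then l 0 else l i)}"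
  define \<tau> where "\<tau> i = (if i = j then 0 else i)" for i :: nat
  have "inj_on \<tau> A" by (auto simp: inj_on_def \<tau>_def A_def)
  moreover have "\<tau> ` A = {k \<in> {0..M}. k \<noteq> j \<and> l j \<le> l k}"
  proof (intro equalityI subsetI)
    fix k assume "k \<in> \<tau> ` A"
    then show "k \<in> {k \<in> {0..M}. k \<noteq> j \<and> l j \<le> l k}"
      using j by (auto simp: \<tau>_def A_def split: if_splits)
  next
    fix k assume k: "k \<in> {k \<in> {0..M}. k \<noteq> j \<and> l j \<le> l k}"
    show "k \<in> \<tau> ` A"
    proof (cases "k = 0")
      case True
      then show ?thesis using k j by (intro image_eqI[of _ _ j]) (auto simp: \<tau>_def A_def)
    next
      case False
      then show ?thesis using k by (intro image_eqI[of _ _ k]) (auto simp: \<tau>_def A_def)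
    qed
  qed
  ultimately have "card A = card {k \<in> {0..M}. k \<noteq> j \<and> l j \<le> l k}"
    using card_image by fastforce
  moreover have "{i \<in> {0..M}. l j \<le> l i} = insert j {k \<in> {0..M}. k \<noteq> j \<and> l j \<le> l k}"
    using j by auto
  ultimately show ?thesis by (simp add: A_def)
qed

lemma measure_le_by_averaging:
  assumes J: "prob_space J" and K: "finite K" and E: "E \<in> sets J" and c: "c \<ge> 0"
    and T_meas: "\<And>j. j \<in> K \<Longrightarrow> T j \<in> J \<rightarrow>\<^sub>M J"
    and T_distr: "\<And>j. j \<in> K \<Longrightarrow> distr J J (T j) = J"
    and count: "AE \<omega> in J. real (card {j \<in> K. T j \<omega> \<in> E}) \<le> c"
  shows "real (card K) * measure J E \<le> c"
proof -
  interpret prob_space J by (rule J)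
  have pre: "T j -` E \<inter> space J \<in> sets J" if "j \<in> K" for j
    using measurable_sets[OF T_meas[OF that] E] .
  have invariant: "emeasure J (T j -` E \<inter> space J) = emeasure J E" if "j \<in> K" for j
    using emeasure_distr[OF T_meas[OF that] E] T_distr[OF that] by simp
  have "of_nat (card K) * emeasure J E = (\<Sum>j\<in>K. emeasure J (T j -` E \<inter> space J))"
    by (simp add: invariant cong: sum.cong)
  also have "\<dots> = (\<integral>\<^sup>+\<omega>. (\<Sum>j\<in>K. indicator (T j -` E \<inter> space J) \<omega>) \<partial>J)"
    using pre by (simp add: nn_integral_sum)
  also have "\<dots> = (\<integral>\<^sup>+\<omega>. ennreal (real (card {j \<in> K. T j \<omega> \<in> E})) \<partial>J)"
    by (intro nn_integral_cong)
      (simp add: indicator_def sum_of_bool_eq K Int_def ennreal_of_nat_eq_real_of_nat)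
  also have "\<dots> \<le> (\<integral>\<^sup>+\<omega>. ennreal c \<partial>J)"
  proof (rule nn_integral_mono_AE)
    show "AE \<omega> in J. ennreal (real (card {j \<in> K. T j \<omega> \<in> E})) \<le> ennreal c"
      using count by eventually_elim (rule ennreal_leI)
  qed
  also have "\<dots> = ennreal c"
    by (simp add: emeasure_space_1)
  finally have "of_nat (card K) * emeasure J E \<le> ennreal c" .
  moreover have "of_nat (card K) * emeasure J E = ennreal (real (card K) * measure J E)"
    by (simp add: emeasure_eq_measure ennreal_of_nat_eq_real_of_nat ennreal_mult)
  ultimately show ?thesis
    using c by (simp add: ennreal_le_iff)
qed

lemma prob_space_joint_law: "sg > 0 \<Longrightarrow> prob_space (joint_law mu sg M)"
  unfolding joint_law_def
  by (intro prob_space_pair prob_space_gauss_vec prob_space_unif_sphere prob_space_PiM)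

type_synonym ('n, 'm) sample = "(real^'n) \<times> (real^'m) \<times> (nat \<Rightarrow> real^'m)"

locale mc_test = orth_complement X V
  for X :: "real^('k::{finite,linorder} + 'p::finite)^'n::finite" and V :: "real^'m::finite^'n" +
  fixes e :: "'k \<Rightarrow> 'm" and cv :: "real^'n \<Rightarrow> real" and M :: nat
begin

definition stat :: "real^'n \<Rightarrow> real^'m \<Rightarrow> real^'m \<Rightarrow> real" where
  "stat y ut w =
     (let yt = Pk X y + sighat X y *\<^sub>R (V *v ut); lam = cv yt
      in Lstat X y lam (blk1 (group_lasso X yt lam)) (\<chi> i. w $ e i))"

definition direction :: "real^'n \<Rightarrow> real^'m" where
  "direction y = (1 / sighat X y) *\<^sub>R (transpose V *v y)"

definition pvalue :: "('n, 'm) sample \<Rightarrow> real" where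
  "pvalue \<omega> = mc_pvalue X V e cv M (fst \<omega>) (fst (snd \<omega>)) (snd (snd \<omega>))"

text \<open>Draw 0 is the observed direction u, draw i (for 1 \<le> i \<le> M) is u^(i).\<close>

definition draw :: "('n, 'm) sample \<Rightarrow> nat \<Rightarrow> real^'m" where
  "draw \<omega> i = (if i = 0 then direction (fst \<omega>) else snd (snd \<omega>) i)"

definition upper_rank :: "('n, 'm) sample \<Rightarrow> nat \<Rightarrow> nat" where
  "upper_rank \<omega> k = card {i \<in> {0..M}.
     stat (fst \<omega>) (fst (snd \<omega>)) (draw \<omega> k) \<le> stat (fst \<omega>) (fst (snd \<omega>)) (draw \<omega> i)}"

definition exchange :: "nat \<Rightarrow> ('n, 'm) sample \<Rightarrow> ('n, 'm) sample" where
  "exchange j \<omega> = (if j = 0 then \<omega> else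
     (fst (exchange_direction (fst \<omega>, snd (snd \<omega>) j)), fst (snd \<omega>),
      (snd (snd \<omega>))(j := snd (exchange_direction (fst \<omega>, snd (snd \<omega>) j)))))"

definition regular :: "('n, 'm) sample \<Rightarrow> bool" where
  "regular \<omega> \<longleftrightarrow> transpose V *v fst \<omega> \<noteq> 0 \<and> (\<forall>i\<in>{1..M}. norm (snd (snd \<omega>) i) = 1)"

lemma mc_pvalue_eq:
  "mc_pvalue X V e cv M y ut us
     = (1 + real (card {j \<in> {1..M}. stat y ut (direction y) \<le> stat y ut (us j)})) / (real M + 1)"
proof -
  have "(1 / sighat X y) *\<^sub>R (transpose V *v (y - yhat X y)) = direction y"
    by (simp add: direction_def yhat_eq matrix_vector_mult_diff_distrib)
  then show ?thesis
    unfolding mc_pvalue_def Let_def stat_def by (simp add: yhat_eq)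
qed

text \<open>Exchanging u with u^(j) leaves P_{-1:k} y and sighat, hence the statistic, unchanged.\<close>

lemma exchange_regular:
  assumes "regular (y, ut, us)" and j: "j \<in> {1..M}"
  obtains y' where "exchange j (y, ut, us) = (y', ut, us(j := direction y))"
    and "stat y' = stat y" and "direction y' = us j"
proof
  define s where "s = norm (transpose V *v y)"
  have s: "s > 0" and u: "norm (us j) = 1"
    using assms by (auto simp: regular_def s_def)
  define y' where "y' = Pk X y + V *v (s *\<^sub>R us j)"
  show "exchange j (y, ut, us) = (y', ut, us(j := direction y))"
    using j by (simp add: exchange_def exchange_direction_def y'_def s_def direction_def
        sighat_eq matrix_vector_mult_scaleR divide_inverse_commute)
  have "transpose V *v y' = s *\<^sub>R us j"
    by (simp add: y'_def matrix_vector_right_distrib)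
  then have sighat': "sighat X y' = sighat X y" and direction': "direction y' = us j"
    using s u by (simp_all add: sighat_eq s_def direction_def)
  show "direction y' = us j" by (rule direction')
  have Pk': "Pk X y' = Pk X y" by (simp add: y'_def)
  show "stat y' = stat y"
    using Lstat_cong[OF Pk' sighat'] by (simp add: fun_eq_iff stat_def Pk' sighat')
qed

lemma pvalue_exchange:
  assumes "regular \<omega>" and j: "j \<le> M"
  shows "pvalue (exchange j \<omega>) = real (upper_rank \<omega> j) / (real M + 1)"
proof -
  obtain y ut us where \<omega>: "\<omega> = (y, ut, us)" by (cases \<omega>) auto
  define l where "l i = stat y ut (draw \<omega> i)" for i
  have "pvalue (exchange j \<omega>)
      = (1 + real (card {i \<in> {1..M}. l j \<le> (if i = j then l 0 else l i)})) / (real M + 1)"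
  proof (cases "j = 0")
    case True
    then have "pvalue (exchange j \<omega>)
        = (1 + real (card {i \<in> {1..M}. stat y ut (direction y) \<le> stat y ut (us i)})) / (real M + 1)"
      by (simp add: pvalue_def exchange_def mc_pvalue_eq \<omega>)
    moreover have "{i \<in> {1..M}. stat y ut (direction y) \<le> stat y ut (us i)}
        = {i \<in> {1..M}. l j \<le> (if i = j then l 0 else l i)}"
      using True by (auto simp: l_def draw_def \<omega>)
    ultimately show ?thesis by (simp only:)
  next
    case False
    then have "j \<in> {1..M}" using j by simp
    with assms(1) obtain y' where exch: "exchange j (y, ut, us) = (y', ut, us(j := direction y))"
      and "stat y' = stat y" and "direction y' = us j"
      unfolding \<omega> by (rule exchange_regular)
    then have "pvalue (exchange j \<omega>) = (1 + real (card
        {i \<in> {1..M}. stat y ut (us j) \<le> stat y ut ((us(j := direction y)) i)})) / (real M + 1)"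
      by (simp add: pvalue_def \<omega> mc_pvalue_eq)
    moreover have "{i \<in> {1..M}. stat y ut (us j) \<le> stat y ut ((us(j := direction y)) i)}
        = {i \<in> {1..M}. l j \<le> (if i = j then l 0 else l i)}"
      using False by (auto simp: l_def draw_def \<omega>)
    ultimately show ?thesis by (simp only:)
  qed
  also have "\<dots> = real (upper_rank \<omega> j) / (real M + 1)"
    using card_exchange_rank[OF j, of l] by (simp add: upper_rank_def l_def \<omega>)
  finally show ?thesis .
qed

lemma exchange_measurable [measurable]:
  assumes "j \<le> M"
  shows "exchange j \<in> joint_law mu sg M \<rightarrow>\<^sub>M joint_law mu sg M"
proof (cases "j = 0")
  case True
  then show ?thesis by (simp add: exchange_def[abs_def])
next
  case False
  then have j: "j \<in> {1..M}" using assms by simp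
  let ?U = "unif_sphere :: (real^'m) measure"
  let ?J = "gauss_vec mu sg \<Otimes>\<^sub>M (?U \<Otimes>\<^sub>M PiM {1..M} (\<lambda>_. ?U))"
  have [measurable]: "(\<lambda>\<omega>. snd (snd \<omega>) j) \<in> ?J \<rightarrow>\<^sub>M ?U"
    by (rule measurable_compose[OF _ measurable_component_singleton[OF j]]) simp
  have [measurable]: "(\<lambda>\<omega>. (snd (snd \<omega>))(j := snd (exchange_direction (fst \<omega>, snd (snd \<omega>) j))))
      \<in> ?J \<rightarrow>\<^sub>M PiM {1..M} (\<lambda>_. ?U)"
    by (rule measurable_fun_upd[where J="{1..M}"]) (use j in auto)
  have "exchange j = (\<lambda>\<omega>. (fst (exchange_direction (fst \<omega>, snd (snd \<omega>) j)), fst (snd \<omega>),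
      (snd (snd \<omega>))(j := snd (exchange_direction (fst \<omega>, snd (snd \<omega>) j)))))"
    using False by (simp add: fun_eq_iff exchange_def)
  then show ?thesis
    unfolding joint_law_def using j by (simp only:) (intro measurable_Pair; measurable)
qed

lemma nn_integral_exchange:
  assumes mu: "mu \<in> span cols2" and sg: "sg > 0" and j: "j \<le> M"
    and h: "h \<in> borel_measurable (joint_law mu sg M)"
  shows "(\<integral>\<^sup>+\<omega>. h (exchange j \<omega>) \<partial>joint_law mu sg M) = (\<integral>\<^sup>+\<omega>. h \<omega> \<partial>joint_law mu sg M)"
proof (cases "j = 0")
  case True
  then show ?thesis by (simp add: exchange_def)
next
  case False
  then have jI: "j \<in> {1..M}" using j by simp
  let ?N = "gauss_vec mu sg" and ?U = "unif_sphere :: (real^'m) measure"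
  let ?P = "PiM {1..M} (\<lambda>_. ?U)" and ?PI = "PiM ({1..M} - {j}) (\<lambda>_. ?U)"
  let ?J = "joint_law mu sg M :: ('n, 'm) sample measure"
  interpret N: prob_space ?N using sg by (rule prob_space_gauss_vec)
  interpret U: prob_space ?U by (rule prob_space_unif_sphere)
  have split: "(\<integral>\<^sup>+\<omega>. g \<omega> \<partial>?J)
      = (\<integral>\<^sup>+ut. \<integral>\<^sup>+x. \<integral>\<^sup>+z. g (fst z, ut, x(j := snd z)) \<partial>(?N \<Otimes>\<^sub>M ?U) \<partial>?PI \<partial>?U)"
    if "g \<in> borel_measurable ?J" for g
    using nn_integral_pair_PiM_component[OF N.prob_space_axioms U.prob_space_axioms jI _ that[unfolded joint_law_def]]
    by (simp add: joint_law_def)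
  have [measurable]: "h \<in> borel_measurable (?N \<Otimes>\<^sub>M (?U \<Otimes>\<^sub>M ?P))"
    using h unfolding joint_law_def .
  have inner: "(\<integral>\<^sup>+z. h (exchange j (fst z, ut, x(j := snd z))) \<partial>(?N \<Otimes>\<^sub>M ?U))
      = (\<integral>\<^sup>+z. h (fst z, ut, x(j := snd z)) \<partial>(?N \<Otimes>\<^sub>M ?U))"
    if [measurable]: "ut \<in> space ?U" "x \<in> space ?PI" for ut x
  proof -
    have [measurable]: "(\<lambda>z. x(j := snd z)) \<in> (borel \<Otimes>\<^sub>M borel) \<rightarrow>\<^sub>M ?P"
      by (rule measurable_fun_upd_component[OF jI measurable_const[OF that(2)]]) measurable
    have "(\<lambda>z. h (fst z, ut, x(j := snd z))) \<in> borel_measurable (borel \<Otimes>\<^sub>M borel)"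
      by measurable
    from nn_integral_exchange_direction[OF mu sg this] show ?thesis
      using False by (simp add: exchange_def)
  qed
  have "(\<lambda>\<omega>. h (exchange j \<omega>)) \<in> borel_measurable ?J"
    by (rule measurable_compose[OF exchange_measurable[OF j] h])
  from split[OF this]
  have "(\<integral>\<^sup>+\<omega>. h (exchange j \<omega>) \<partial>?J)
      = (\<integral>\<^sup>+ut. \<integral>\<^sup>+x. \<integral>\<^sup>+z. h (fst z, ut, x(j := snd z)) \<partial>(?N \<Otimes>\<^sub>M ?U) \<partial>?PI \<partial>?U)"
    by (simp only: inner cong: nn_integral_cong)
  also have "\<dots> = (\<integral>\<^sup>+\<omega>. h \<omega> \<partial>?J)"
    by (rule split[OF h, symmetric])
  finally show ?thesis .
qed

lemma distr_exchange:
  assumes mu: "mu \<in> span cols2" and sg: "sg > 0" and j: "j \<le> M"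
  shows "distr (joint_law mu sg M) (joint_law mu sg M) (exchange j) = joint_law mu sg M"
proof (rule measure_eqI)
  let ?J = "joint_law mu sg M :: ('n, 'm) sample measure"
  fix A assume A_distr: "A \<in> sets (distr ?J ?J (exchange j))"
  then have A[measurable]: "A \<in> sets ?J" by simp
  have "emeasure (distr ?J ?J (exchange j)) A = (\<integral>\<^sup>+\<omega>. indicator A \<omega> \<partial>distr ?J ?J (exchange j))"
    by (rule nn_integral_indicator[OF A_distr, symmetric])
  also have "\<dots> = (\<integral>\<^sup>+\<omega>. indicator A (exchange j \<omega>) \<partial>?J)"
    by (rule nn_integral_distr[OF exchange_measurable[OF j]]) measurable
  also have "\<dots> = (\<integral>\<^sup>+\<omega>. indicator A \<omega> \<partial>?J)"
    by (rule nn_integral_exchange[OF mu sg j borel_measurable_indicator[OF A]])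
  also have "\<dots> = emeasure ?J A"
    by (rule nn_integral_indicator[OF A])
  finally show "emeasure (distr ?J ?J (exchange j)) A = emeasure ?J A" .
qed simp

lemma AE_regular:
  assumes sg: "sg > 0"
  shows "AE \<omega> in joint_law mu sg M. regular \<omega>"
proof -
  let ?N = "gauss_vec mu sg" and ?U = "unif_sphere :: (real^'m) measure"
  let ?P = "PiM {1..M} (\<lambda>_. ?U)"
  interpret N: prob_space ?N using sg by (rule prob_space_gauss_vec)
  interpret U: prob_space ?U by (rule prob_space_unif_sphere)
  interpret P: prob_space ?P by (rule prob_space_PiM) (rule prob_space_unif_sphere)
  interpret UP: pair_sigma_finite ?U ?P by unfold_locales
  interpret NUP: pair_sigma_finite ?N "?U \<Otimes>\<^sub>M ?P" by unfold_locales
  have unit_pred [measurable]: "Measurable.pred (?U \<Otimes>\<^sub>M ?P) (\<lambda>v. \<forall>i\<in>{1..M}. norm (snd v i) = 1)"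
  proof (rule pred_intros_finite(3))
    fix i assume "i \<in> {1..M}"
    from measurable_compose[OF measurable_snd measurable_component_singleton[OF this, of "\<lambda>_. ?U"],
        of ?U]
    have [measurable]: "(\<lambda>v. snd v i) \<in> ?U \<Otimes>\<^sub>M ?P \<rightarrow>\<^sub>M borel"
      unfolding measurable_cong_sets[OF refl sets_unif_sphere] .
    show "Measurable.pred (?U \<Otimes>\<^sub>M ?P) (\<lambda>v. norm (snd v i) = 1)" by measurable
  qed simp
  have "AE us in ?P. \<forall>i\<in>{1..M}. norm (us i) = 1"
    by (intro AE_finite_allI AE_PiM_component) (simp_all add: prob_space_unif_sphere AE_unif_sphere_norm)
  then have units: "AE v in ?U \<Otimes>\<^sub>M ?P. \<forall>i\<in>{1..M}. norm (snd v i) = 1"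
    by (intro UP.AE_pair_measure) (use unit_pred in \<open>simp_all add: pred_def\<close>)
  have "AE y in ?N. AE v in ?U \<Otimes>\<^sub>M ?P. regular (y, v)"
    using AE_gauss_vec_transpose_V_nonzero[of mu sg]
  proof eventually_elim
    case (elim y)
    show ?case
      using units by eventually_elim (simp add: regular_def elim)
  qed
  moreover have "Measurable.pred (?N \<Otimes>\<^sub>M (?U \<Otimes>\<^sub>M ?P)) regular"
    unfolding regular_def by measurable
  ultimately have "AE \<omega> in ?N \<Otimes>\<^sub>M (?U \<Otimes>\<^sub>M ?P). regular \<omega>"
    by (intro NUP.AE_pair_measure) (simp_all add: pred_def)
  then show ?thesis unfolding joint_law_def .
qed

lemma AE_card_exchange_le:
  assumes sg: "sg > 0" and alpha: "alpha \<ge> 0"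
  shows "AE \<omega> in joint_law mu sg M. real (card {j \<in> {0..M}.
     exchange j \<omega> \<in> {\<omega>' \<in> space (joint_law mu sg M). pvalue \<omega>' \<le> alpha}}) \<le> alpha * (real M + 1)"
  using AE_regular[OF sg] AE_space
proof eventually_elim
  case (elim \<omega>)
  have "exchange j \<omega> \<in> {\<omega>' \<in> space (joint_law mu sg M). pvalue \<omega>' \<le> alpha}
      \<longleftrightarrow> real (upper_rank \<omega> j) \<le> alpha * (real M + 1)" if "j \<in> {0..M}" for j
    using measurable_space[OF exchange_measurable elim(2)] pvalue_exchange[OF elim(1)] that
    by (simp add: pos_divide_le_eq add_pos_nonneg)
  then have "{j \<in> {0..M}. exchange j \<omega> \<in> {\<omega>' \<in> space (joint_law mu sg M). pvalue \<omega>' \<le> alpha}}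
      = {j \<in> {0..M}. real (upper_rank \<omega> j) \<le> alpha * (real M + 1)}"
    by blast
  then show ?case
    using card_low_ranks_le[of "{0..M}" "alpha * (real M + 1)"] alpha
    by (simp add: upper_rank_def)
qed

end

theorem corollary2p3:
  fixes X :: "real^('k::{finite,linorder} + 'p::finite)^'n::finite"
    and beta :: "real^('k + 'p)"
    and sg :: real
    and M :: nat
    and V :: "real^'m::finite^'n"
    and e :: "'k \<Rightarrow> 'm"
    and cv :: "real^'n \<Rightarrow> real"
    and alpha :: real
  assumes n_ge_d: "CARD('n) \<ge> CARD('k + 'p)"
    and full_rank: "rank X = CARD('k + 'p)"
    and H0: "\<forall>i. beta $ Inl i = 0"
    and sigma_pos: "sg > 0"
    and M_ge: "M \<ge> 1"
    and V_orth: "transpose V ** V = mat 1"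
    and V_span: "range (\<lambda>c. V *v c) = {x. \<forall>q. inner (column (Inr q) X) x = 0}"
    and e_inj: "inj e"
    and V_first: "\<forall>i. column (e i) V = Vcol X i"
    and cv_pos: "\<forall>v. cv v > 0"
    and alpha: "0 \<le> alpha" "alpha \<le> 1"
  shows "measure (joint_law (X *v beta) sg M)
           {(y, ut, us) \<in> space (joint_law (X *v beta) sg M).
              mc_pvalue X V e cv M y ut us \<le> alpha} \<le> alpha"
proof -
  interpret mc_test X V e cv M using V_orth V_span by unfold_locales
  let ?J = "joint_law (X *v beta) sg M :: ('n, 'm) sample measure"
  define E where "E = {\<omega> \<in> space ?J. pvalue \<omega> \<le> alpha}"
  have E_eq: "{(y, ut, us) \<in> space ?J. mc_pvalue X V e cv M y ut us \<le> alpha} = E"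
    by (auto simp: E_def pvalue_def)
  show ?thesis
  proof (cases "E \<in> sets ?J")
    case False
    \<comment> \<open>cv is an arbitrary function, so the event need not be measurable; its measure is then 0\<close>
    then show ?thesis using alpha by (simp add: E_eq measure_notin_sets)
  next
    case True
    have mu: "X *v beta \<in> span cols2" using H0 by (rule mean_in_span_cols2)
    have "real (card {0..M}) * measure ?J E \<le> alpha * (real M + 1)"
      using AE_card_exchange_le[OF sigma_pos alpha(1), where mu = "X *v beta", folded E_def]
      by (intro measure_le_by_averaging[where T = exchange])
        (simp_all add: True prob_space_joint_law sigma_pos alpha distr_exchange[OF mu sigma_pos])
    then have "(real M + 1) * measure ?J E \<le> (real M + 1) * alpha"
      by (simp add: mult.commute add.commute)
    then show ?thesis
      unfolding E_eq by (rule mult_left_le_imp_le) simp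
  qed
qed

end
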